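(* Let $N=2n+1$ and $1\le k\le n$. The map $R:\mathcal F(2k-1,N)\to\mathcal F(2k+1,N)$ is surjective, and for every $\tau\in\mathcal F(2k+1,N)$, $$\big|\{\tilde\tau\in\mathcal F(2k-1,N): R(\tilde\tau)=\tau\}\big|=(n+k+1)\,k\,(2k-1).$$
   Context: Graphs are finite and undirected. A binary tree is either a single vertex (its root) or a tree in which exactly one vertex, the root, has degree $2$ and every other vertex has degree $3$ or $1$ (leaves). The height of a vertex is its graph distance to the root; a non-leaf vertex $v$ has exactly two neighbours of larger height (its children), and the two edges from $v$ to its children are its outgoing edges. A binary forest on $V=\{1,\dots,N\}$ is a graph on $V$ whose connected components are binary trees; internal vertices are the non-leaves of the components of size $\ge3$ (vertices of degree $>1$). A binary forest with $m$ components has $(N-m)/2$ internal vertices. A labeling is a bijection from the set of internal vertices to $\{1,\dots,(N-m)/2\}$; $\mathcal F(m,N)$ is the set of binary forests on $V$ with $m$ components together with a labeling. The map $R$ sends $\tau\in\mathcal F(2k-1,N)$ to the labeled forest obtained by selecting the internal vertex with the highest label, deleting both its outgoing edges and removing its label. *)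

theory Defs
  imports Main
begin

definition verts :: "nat \<Rightarrow> nat set" where
  "verts N = {1..N}"

definition is_graph :: "nat \<Rightarrow> nat set set \<Rightarrow> bool" where
  "is_graph N E \<longleftrightarrow> E \<subseteq> {{u, v} | u v. u \<in> verts N \<and> v \<in> verts N \<and> u \<noteq> v}"

definition adj :: "nat set set \<Rightarrow> (nat \<times> nat) set" where
  "adj E = {(u, v). {u, v} \<in> E \<and> u \<noteq> v}"

definition deg :: "nat set set \<Rightarrow> nat \<Rightarrow> nat" where
  "deg E v = card {e \<in> E. v \<in> e}"

definition comp :: "nat \<Rightarrow> nat set set \<Rightarrow> nat \<Rightarrow> nat set" where
  "comp N E u = {w \<in> verts N. (u, w) \<in> (adj E)\<^sup>*}"

definition components :: "nat \<Rightarrow> nat set set \<Rightarrow> nat set set" where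
  "components N E = comp N E ` verts N"

definition tree_comp :: "nat set set \<Rightarrow> nat set \<Rightarrow> bool" where
  "tree_comp E C \<longleftrightarrow> card {e \<in> E. e \<subseteq> C} = card C - 1"

definition binary_tree_comp :: "nat set set \<Rightarrow> nat set \<Rightarrow> bool" where
  "binary_tree_comp E C \<longleftrightarrow> tree_comp E C \<and>
     (card C = 1 \<or>
      ((\<exists>!r. r \<in> C \<and> deg E r = 2) \<and>
       (\<forall>u \<in> C. deg E u \<noteq> 2 \<longrightarrow> deg E u = 3 \<or> deg E u = 1)))"

definition binary_forest :: "nat \<Rightarrow> nat \<Rightarrow> nat set set \<Rightarrow> bool" where
  "binary_forest N m E \<longleftrightarrow> is_graph N E \<and>
     (\<forall>C \<in> components N E. binary_tree_comp E C) \<and> card (components N E) = m"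

definition internal :: "nat \<Rightarrow> nat set set \<Rightarrow> nat set" where
  "internal N E = {v \<in> verts N. 1 < deg E v}"

text \<open>Labeled binary forests F(m,N): the labeling is a bijection from the internal vertices
  onto {1..(N-m)/2}, extended by 0 outside the internal vertices (so that equality of
  labeled forests is equality of pairs).\<close>
definition labeled_forests :: "nat \<Rightarrow> nat \<Rightarrow> (nat set set \<times> (nat \<Rightarrow> nat)) set" where
  "labeled_forests m N = {(E, lab). binary_forest N m E \<and>
      bij_betw lab (internal N E) {1..(N - m) div 2} \<and>
      (\<forall>v. v \<notin> internal N E \<longrightarrow> lab v = 0)}"

definition root_of :: "nat \<Rightarrow> nat set set \<Rightarrow> nat \<Rightarrow> nat" where
  "root_of N E v = (THE r. r \<in> comp N E v \<and> deg E r = 2)"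

definition height :: "nat \<Rightarrow> nat set set \<Rightarrow> nat \<Rightarrow> nat" where
  "height N E v = (LEAST d. (root_of N E v, v) \<in> (adj E) ^^ d)"

definition children :: "nat \<Rightarrow> nat set set \<Rightarrow> nat \<Rightarrow> nat set" where
  "children N E v = {w. (v, w) \<in> adj E \<and> height N E v < height N E w}"

definition top_vertex :: "nat \<Rightarrow> nat set set \<Rightarrow> (nat \<Rightarrow> nat) \<Rightarrow> nat" where
  "top_vertex N E lab = (THE v. v \<in> internal N E \<and> (\<forall>u \<in> internal N E. lab u \<le> lab v))"

definition R_map :: "nat \<Rightarrow> nat set set \<times> (nat \<Rightarrow> nat) \<Rightarrow> nat set set \<times> (nat \<Rightarrow> nat)" where
  "R_map N \<tau> = (let E = fst \<tau>; lab = snd \<tau>; v = top_vertex N E lab in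
      (E - {{v, w} | w. w \<in> children N E v}, lab(v := 0)))"

end

theory Submission
  imports Defs
begin

text \<open>Conversely,
  let \<tau> have 2k+1 components. Choose a vertex v of degree at most one, give it the new top
  label, and join it to the roots of two of the 2k trees not containing v: the result is a
  binary forest with 2k-1 components in which v is internal with these roots as children, so R
  maps it back to \<tau>. Every preimage arises in exactly one way, since deleting the outgoing edges
  of v splits its tree into three binary trees, and heights keep the old root on the side of v.
  Now \<tau> has n-k internal vertices, so there are 2n+1-(n-k) = n+k+1 choices for v and
  (2k choose 2) = k(2k-1) choices for the two roots.\<close>

section \<open>Connected components\<close>

lemma verts_finite[simp]: "finite (verts N)" by (simp add: verts_def)

lemma is_graphD: "is_graph N E \<Longrightarrow> e \<in> E \<Longrightarrow> \<exists>u v. e = {u,v} \<and> u \<in> verts N \<and> v \<in> verts N \<and> u \<noteq> v"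
  unfolding is_graph_def by blast

lemma is_graph_subset_Pow: "is_graph N E \<Longrightarrow> E \<subseteq> Pow (verts N)"
  unfolding is_graph_def by blast

lemma is_graph_finite: "is_graph N E \<Longrightarrow> finite E"
  using is_graph_subset_Pow[of N E] finite_subset[of E "Pow (verts N)"] by simp

lemma is_graph_mono: "is_graph N E \<Longrightarrow> F \<subseteq> E \<Longrightarrow> is_graph N F"
  unfolding is_graph_def by blast

lemma adj_iff: "(u,v) \<in> adj E \<longleftrightarrow> {u,v} \<in> E \<and> u \<noteq> v" by (simp add: adj_def)

lemma adj_sym: "(u,v) \<in> adj E \<Longrightarrow> (v,u) \<in> adj E" by (auto simp: adj_def insert_commute)

lemma sym_adj: "sym (adj E)" by (meson adj_sym symI)

lemma adj_verts: "is_graph N E \<Longrightarrow> (u,v) \<in> adj E \<Longrightarrow> u \<in> verts N \<and> v \<in> verts N"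
  unfolding adj_def is_graph_def by (auto simp: doubleton_eq_iff)

lemma is_graph_edge_neq: "is_graph N E \<Longrightarrow> {u,v} \<in> E \<Longrightarrow> u \<noteq> v"
  unfolding is_graph_def by (auto simp: doubleton_eq_iff)

lemma adj_iff_edge: "is_graph N E \<Longrightarrow> (u,v) \<in> adj E \<longleftrightarrow> {u,v} \<in> E"
  using is_graph_edge_neq adj_iff by blast

lemma rtrancl_adj_sym: "(u,w) \<in> (adj E)\<^sup>* \<Longrightarrow> (w,u) \<in> (adj E)\<^sup>*"
  using sym_adj sym_rtrancl by (metis symD)

lemma rtrancl_adj_verts:
  assumes "is_graph N E" "(u,w) \<in> (adj E)\<^sup>*" "u \<in> verts N"
  shows "w \<in> verts N"
  using assms(2,3) by (induction rule: rtrancl_induct) (auto dest: adj_verts[OF assms(1)])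

lemma comp_subset_verts: "comp N E u \<subseteq> verts N" unfolding comp_def by auto

lemma comp_self: "u \<in> verts N \<Longrightarrow> u \<in> comp N E u" unfolding comp_def by auto

lemma comp_mem_iff: "w \<in> comp N E u \<longleftrightarrow> w \<in> verts N \<and> (u,w) \<in> (adj E)\<^sup>*"
  unfolding comp_def by auto

lemma comp_eq_if_mem: "is_graph N E \<Longrightarrow> w \<in> comp N E u \<Longrightarrow> comp N E w = comp N E u"
proof -
  assume "w \<in> comp N E u"
  then have uw: "(u,w) \<in> (adj E)\<^sup>*" by (simp add: comp_mem_iff)
  then have wu: "(w,u) \<in> (adj E)\<^sup>*" by (rule rtrancl_adj_sym)
  show ?thesis
  proof (rule set_eqI)
    fix x
    show "x \<in> comp N E w \<longleftrightarrow> x \<in> comp N E u"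
      unfolding comp_mem_iff
        using uw wu rtrancl_trans[of u w "adj E" x] rtrancl_trans[of w u "adj E" x] by blast
  qed
qed

lemma comp_eq_iff:
  "is_graph N E \<Longrightarrow> u \<in> verts N \<Longrightarrow> w \<in> verts N \<Longrightarrow> comp N E w = comp N E u \<longleftrightarrow> w \<in> comp N E u"
proof
  assume g: "is_graph N E" and u: "u \<in> verts N" and w: "w \<in> verts N"
  { assume "comp N E w = comp N E u"
    then show "w \<in> comp N E u" using comp_self[OF w, of E] by simp }
  { assume "w \<in> comp N E u" then show "comp N E w = comp N E u"
    using comp_eq_if_mem[OF g] by blast }
qed

lemma comp_disjoint: "is_graph N E \<Longrightarrow> comp N E u \<noteq> comp N E w \<Longrightarrow> comp N E u \<inter> comp N E w = {}"
proof (rule ccontr)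
  assume g: "is_graph N E" and ne: "comp N E u \<noteq> comp N E w" and "comp N E u \<inter> comp N E w \<noteq> {}"
  then obtain x where x1: "x \<in> comp N E u" and x2: "x \<in> comp N E w" by blast
  have "comp N E x = comp N E u" "comp N E x = comp N E w"
    using comp_eq_if_mem[OF g x1] comp_eq_if_mem[OF g x2] by auto
  with ne show False by simp
qed

lemma comp_in_components: "u \<in> verts N \<Longrightarrow> comp N E u \<in> components N E"
  unfolding components_def by auto

lemma finite_components[simp]: "finite (components N E)" unfolding components_def by simp

lemma components_nonempty: "C \<in> components N E \<Longrightarrow> C \<noteq> {}"
  unfolding components_def using comp_self by (metis empty_iff imageE)

lemma components_subset_verts: "C \<in> components N E \<Longrightarrow> C \<subseteq> verts N"
  unfolding components_def using comp_subset_verts by (metis imageE)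

lemma comp_eq_component: "is_graph N E \<Longrightarrow> C \<in> components N E \<Longrightarrow> x \<in> C \<Longrightarrow> comp N E x = C"
  unfolding components_def using comp_eq_if_mem by (metis imageE)

lemma components_eq_if_mem:
  "is_graph N E \<Longrightarrow> C \<in> components N E \<Longrightarrow> D \<in> components N E \<Longrightarrow> x \<in> C \<Longrightarrow> x \<in> D \<Longrightarrow> C = D"
  using comp_eq_component by metis

lemma Union_components: "\<Union> (components N E) = verts N"
proof
  show "\<Union> (components N E) \<subseteq> verts N" using components_subset_verts by blast
  show "verts N \<subseteq> \<Union> (components N E)"
  proof
    fix x assume "x \<in> verts N"
    then show "x \<in> \<Union> (components N E)"
      using comp_self[of x N E] comp_in_components[of x N E] by blast
  qed
qed

lemma edge_mem_comp: "is_graph N E \<Longrightarrow> {x,y} \<in> E \<Longrightarrow> y \<in> comp N E x"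
proof -
  assume g: "is_graph N E" and e: "{x,y} \<in> E"
  then have "(x,y) \<in> adj E" using adj_iff_edge by blast
  then show ?thesis using adj_verts[OF g] unfolding comp_def by auto
qed

lemma edge_subset_comp: "is_graph N E \<Longrightarrow> e \<in> E \<Longrightarrow> x \<in> e \<Longrightarrow> e \<subseteq> comp N E x"
proof -
  assume g: "is_graph N E" and e: "e \<in> E" and x: "x \<in> e"
  obtain p q where pq: "e = {p,q}" "p \<in> verts N" "q \<in> verts N" using is_graphD[OF g e] by blast
  show ?thesis
  proof (cases "x = p")
    case True
    then show ?thesis using pq e edge_mem_comp[OF g, of p q] comp_self[of p] by auto
  next
    case False
    then have "x = q" using x pq by auto
    then show ?thesis using pq e edge_mem_comp[OF g, of q p] comp_self[of q]
      by (auto simp: insert_commute)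
  qed
qed

section \<open>Adding an edge\<close>

lemma adj_insert: "x \<noteq> y \<Longrightarrow> adj (insert {x,y} E) = insert (x,y) (insert (y,x) (adj E))"
  unfolding adj_def by (auto simp: doubleton_eq_iff)

lemma rtrancl_adj_insert:
  assumes "x \<noteq> y"
  shows "(u,w) \<in> (adj (insert {x,y} E))\<^sup>* \<longleftrightarrow> (u,w) \<in> (adj E)\<^sup>* \<or>
     ((u,x) \<in> (adj E)\<^sup>* \<and> (y,w) \<in> (adj E)\<^sup>*) \<or> ((u,y) \<in> (adj E)\<^sup>* \<and> (x,w) \<in> (adj E)\<^sup>*)"
  using adj_insert[OF assms] by (auto simp: rtrancl_insert dest: rtrancl_trans)

lemma is_graph_insert:
  "is_graph N E \<Longrightarrow> x \<in> verts N \<Longrightarrow> y \<in> verts N \<Longrightarrow> x \<noteq> y \<Longrightarrow> is_graph N (insert {x,y} E)"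
  unfolding is_graph_def by blast

lemma comp_insert:
  assumes g: "is_graph N E" and x: "x \<in> verts N" and y: "y \<in> verts N" and xy: "x \<noteq> y"
    and u: "u \<in> verts N"
  shows "comp N (insert {x,y} E) u =
    (if u \<in> comp N E x \<union> comp N E y then comp N E x \<union> comp N E y else comp N E u)"
proof -
  have to_comp: "(p,q) \<in> (adj E)\<^sup>* \<longleftrightarrow> q \<in> comp N E p" if "p \<in> verts N" for p q
    using rtrancl_adj_verts[OF g _ that] by (auto simp: comp_mem_iff)
  have sym: "p \<in> comp N E q \<longleftrightarrow> q \<in> comp N E p" if "p \<in> verts N" "q \<in> verts N" for p q
    using comp_eq_iff[OF g] that by metis
  have "w \<in> comp N (insert {x,y} E) u \<longleftrightarrow>
      w \<in> comp N E u \<or> (u \<in> comp N E x \<and> w \<in> comp N E y) \<or> (u \<in> comp N E y \<and> w \<in> comp N E x)" for w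
  proof -
    have "w \<in> comp N (insert {x,y} E) u \<longleftrightarrow> w \<in> verts N \<and> (u,w) \<in> (adj (insert {x,y} E))\<^sup>*"
      by (simp add: comp_mem_iff)
    then show ?thesis
      using rtrancl_adj_insert[OF xy, of u w E] to_comp[OF u] to_comp[OF x] to_comp[OF y]
        sym[OF u x] sym[OF u y] comp_subset_verts by blast
  qed
  then show ?thesis using comp_eq_if_mem[OF g, of u x] comp_eq_if_mem[OF g, of u y] by auto
qed

lemma components_insert:
  assumes g: "is_graph N E" and x: "x \<in> verts N" and y: "y \<in> verts N" and xy: "x \<noteq> y"
  shows "components N (insert {x,y} E) =
     (if y \<in> comp N E x then components N E
      else insert (comp N E x \<union> comp N E y) (components N E - {comp N E x, comp N E y}))"
proof -
  let ?U = "comp N E x \<union> comp N E y"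
  have ci: "components N (insert {x,y} E) = (\<lambda>u. if u \<in> ?U then ?U else comp N E u) ` verts N"
    unfolding components_def using comp_insert[OF assms] by (intro image_cong) auto
  show ?thesis
  proof (cases "y \<in> comp N E x")
    case True
    then have "?U = comp N E x" using comp_eq_if_mem[OF g] by blast
    then have "(\<lambda>u. if u \<in> ?U then ?U else comp N E u) ` verts N = components N E"
      unfolding components_def using comp_eq_if_mem[OF g, of _ x] by (intro image_cong) auto
    then show ?thesis using ci True by simp
  next
    case False
    have "verts N \<inter> ?U \<noteq> {}" using x comp_self[OF x] by blast
    then have "(\<lambda>u. if u \<in> ?U then ?U else comp N E u) ` verts N
        = insert ?U (comp N E ` (verts N - ?U))"
      by auto
    moreover have "comp N E ` (verts N - ?U) = components N E - {comp N E x, comp N E y}"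
      unfolding components_def using comp_self comp_eq_if_mem[OF g] by blast
    ultimately show ?thesis using ci False by simp
  qed
qed

lemma card_components_insert:
  assumes g: "is_graph N E" and x: "x \<in> verts N" and y: "y \<in> verts N" and xy: "x \<noteq> y"
  shows "card (components N (insert {x,y} E)) =
     (if y \<in> comp N E x then card (components N E) else card (components N E) - 1)"
proof (cases "y \<in> comp N E x")
  case False
  let ?C = "{comp N E x, comp N E y}"
  have sub: "?C \<subseteq> components N E" using comp_in_components x y by auto
  have "comp N E x \<noteq> comp N E y" using False comp_self[OF y] by auto
  then have "card ?C = 2" by simp
  then have "card (components N E - ?C) + 2 = card (components N E)"
    using sub card_Diff_subset[of ?C] card_mono[OF _ sub] by simp
  moreover have "comp N E x \<union> comp N E y \<notin> components N E"
  proof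
    assume "comp N E x \<union> comp N E y \<in> components N E"
    then have "comp N E x = comp N E x \<union> comp N E y"
      using comp_eq_component[OF g] comp_self[OF x] by blast
    then show False using False comp_self[OF y] by blast
  qed
  ultimately show ?thesis using components_insert[OF assms] False by simp
qed (use components_insert[OF assms] in simp)

lemma comp_empty: "u \<in> verts N \<Longrightarrow> comp N {} u = {u}"
  unfolding comp_def adj_def by auto

lemma card_components_empty: "card (components N {}) = N"
proof -
  have "components N {} = (\<lambda>u. {u}) ` verts N" unfolding components_def using comp_empty by auto
  then show ?thesis by (simp add: card_image verts_def)
qed

lemma card_verts_le_components_edges:
  assumes "is_graph N E"
  shows "N \<le> card (components N E) + card E"
proof -
  have "finite E" using is_graph_finite[OF assms] .
  then show ?thesis using assms
  proof (induction E rule: finite_induct)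
    case empty
    then show ?case using card_components_empty by simp
  next
    case (insert e F)
    have gF: "is_graph N F" using is_graph_mono[OF insert.prems] by blast
    obtain x y where e: "e = {x,y}" "x \<in> verts N" "y \<in> verts N" "x \<noteq> y"
      using is_graphD[OF insert.prems] by blast
    have "card (components N (insert e F)) \<ge> card (components N F) - 1"
      using card_components_insert[OF gF e(2-4)] e(1) by simp
    then show ?case using insert.IH[OF gF] insert.hyps by simp
  qed
qed

section \<open>Counting edges\<close>

definition edges_in :: "nat set set \<Rightarrow> nat set \<Rightarrow> nat set set" where
  "edges_in E C = {e \<in> E. e \<subseteq> C}"

lemma sum_card_components: "is_graph N E \<Longrightarrow> (\<Sum>C\<in>components N E. card C) = N"
proof -
  assume g: "is_graph N E"
  have "pairwise disjnt (components N E)"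
    unfolding pairwise_def disjnt_def using components_eq_if_mem[OF g] by (metis disjoint_iff)
  moreover have "\<And>C. C \<in> components N E \<Longrightarrow> finite C"
    using components_subset_verts[of _ N E] finite_subset[OF _ verts_finite] by metis
  ultimately have "card (\<Union>(components N E)) = (\<Sum>C\<in>components N E. card C)"
    by (rule card_Union_disjoint)
  then show ?thesis using Union_components[of N E] by (simp add: verts_def)
qed

lemma edges_in_disjoint: "is_graph N E \<Longrightarrow> C \<inter> D = {} \<Longrightarrow> edges_in E C \<inter> edges_in E D = {}"
  unfolding edges_in_def by (fastforce dest: is_graphD)

lemma finite_edges_in: "is_graph N E \<Longrightarrow> finite (edges_in E C)"
  unfolding edges_in_def using is_graph_finite by simp

lemma card_edges_eq_sum_components:
  assumes g: "is_graph N E"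
  shows "card E = (\<Sum>C\<in>components N E. card (edges_in E C))"
proof -
  have "E = (\<Union>C\<in>components N E. edges_in E C)"
  proof
    show "E \<subseteq> (\<Union>C\<in>components N E. edges_in E C)"
    proof
      fix e assume e: "e \<in> E"
      obtain x y where xy: "e = {x,y}" "x \<in> verts N" using is_graphD[OF g e] by blast
      then have "e \<subseteq> comp N E x" using edge_subset_comp[OF g e] by simp
      then show "e \<in> (\<Union>C\<in>components N E. edges_in E C)"
        using comp_in_components[OF xy(2)] e unfolding edges_in_def by blast
    qed
  qed (auto simp: edges_in_def)
  moreover have "C \<inter> D = {}" if "C \<in> components N E" "D \<in> components N E" "C \<noteq> D" for C D
    using components_eq_if_mem[OF g] that by blast
  ultimately show ?thesis
    using card_UN_disjoint[of "components N E" "edges_in E"] finite_edges_in[OF g] edges_in_disjoint[OF g]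
    by simp
qed

lemma card_component_pos: "C \<in> components N E \<Longrightarrow> 0 < card C"
  using components_nonempty components_subset_verts finite_subset[OF _ verts_finite]
  by (metis card_gt_0_iff)

lemma card_edges_components_forest:
  assumes g: "is_graph N E" and t: "\<forall>C\<in>components N E. tree_comp E C"
  shows "card E + card (components N E) = N"
proof -
  have "card E = (\<Sum>C\<in>components N E. card C - 1)"
    using card_edges_eq_sum_components[OF g] t unfolding tree_comp_def edges_in_def by simp
  moreover have "(\<Sum>C\<in>components N E. card C) = (\<Sum>C\<in>components N E. (card C - 1) + 1)"
    using card_component_pos by (intro sum.cong) fastforce+
  ultimately show ?thesis using sum_card_components[OF g] by (simp add: sum_Suc)
qed

lemma comp_edges_in:
  assumes g: "is_graph N E" and X: "X \<in> components N E" and u: "u \<in> verts N"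
  shows "comp N (edges_in E X) u = (if u \<in> X then X else {u})"
proof (cases "u \<in> X")
  case True
  have cu: "comp N E u = X" using comp_eq_component[OF g X True] .
  have "w \<in> X \<and> (u,w) \<in> (adj (edges_in E X))\<^sup>*" if "(u,w) \<in> (adj E)\<^sup>*" for w
    using that
  proof (induction rule: rtrancl_induct)
    case (step p q)
    then have "q \<in> comp N E p" using edge_mem_comp[OF g] adj_iff by blast
    then have "q \<in> X" using comp_eq_component[OF g X] step.IH by blast
    then have "(p,q) \<in> adj (edges_in E X)" using step unfolding adj_def edges_in_def by auto
    then show ?case using \<open>q \<in> X\<close> step.IH by auto
  qed (use True in simp)
  moreover have "adj (edges_in E X) \<subseteq> adj E" unfolding adj_def edges_in_def by auto
  ultimately show ?thesis
    using True cu rtrancl_mono[of "adj (edges_in E X)" "adj E"] unfolding comp_def by auto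
next
  case False
  have "u = w" if "(u,w) \<in> (adj (edges_in E X))\<^sup>*" for w
    using that False by (cases rule: converse_rtranclE) (auto simp: adj_def edges_in_def)
  then show ?thesis using False u unfolding comp_def by auto
qed

lemma components_edges_in:
  assumes g: "is_graph N E" and X: "X \<in> components N E"
  shows "components N (edges_in E X) = insert X ((\<lambda>u. {u}) ` (verts N - X))"
proof -
  have "components N (edges_in E X) = (\<lambda>u. if u \<in> X then X else {u}) ` verts N"
    unfolding components_def using comp_edges_in[OF g X] by simp
  moreover have "verts N \<inter> X \<noteq> {}"
    using components_nonempty[OF X] components_subset_verts[OF X] by blast
  ultimately show ?thesis by auto
qed

lemma card_component_le_edges:
  assumes g: "is_graph N E" and X: "X \<in> components N E"
  shows "card X \<le> card (edges_in E X) + 1"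
proof -
  have XV: "X \<subseteq> verts N" using components_subset_verts[OF X] .
  have "X \<notin> (\<lambda>u. {u}) ` (verts N - X)" using components_nonempty[OF X] by blast
  then have "card (components N (edges_in E X)) = card (verts N - X) + 1"
    using components_edges_in[OF g X] by (simp add: card_image)
  also have "\<dots> = N - card X + 1"
    using card_Diff_subset[OF finite_subset[OF XV verts_finite] XV] by (simp add: verts_def)
  finally show ?thesis
    using card_verts_le_components_edges[OF is_graph_mono[OF g], of "edges_in E X"]
      card_mono[OF verts_finite XV] unfolding edges_in_def verts_def by force
qed

section \<open>Neighbours and degrees\<close>

definition nbrs :: "nat set set \<Rightarrow> nat \<Rightarrow> nat set" where
  "nbrs E v = {w. {v,w} \<in> E}"

lemma nbrs_adj: "is_graph N E \<Longrightarrow> w \<in> nbrs E v \<longleftrightarrow> (v,w) \<in> adj E"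
  unfolding nbrs_def using adj_iff_edge by blast

lemma nbrs_verts: "is_graph N E \<Longrightarrow> w \<in> nbrs E v \<Longrightarrow> w \<in> verts N \<and> v \<in> verts N \<and> w \<noteq> v"
proof -
  assume g: "is_graph N E" and w: "w \<in> nbrs E v"
  then have "(v,w) \<in> adj E" using nbrs_adj by blast
  then show ?thesis using adj_verts[OF g] adj_iff by blast
qed

lemma nbrs_finite: "is_graph N E \<Longrightarrow> finite (nbrs E v)"
proof -
  assume g: "is_graph N E"
  have "nbrs E v \<subseteq> verts N" using nbrs_verts[OF g] by blast
  then show ?thesis using finite_subset verts_finite by blast
qed

lemma deg_eq_card_nbrs:
  assumes g: "is_graph N E"
  shows "deg E v = card (nbrs E v)"
proof -
  have "{e \<in> E. v \<in> e} = (\<lambda>w. {v,w}) ` nbrs E v"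
  proof
    show "{e \<in> E. v \<in> e} \<subseteq> (\<lambda>w. {v,w}) ` nbrs E v"
    proof
      fix e assume e: "e \<in> {e \<in> E. v \<in> e}"
      then obtain w where "e = {v,w}"
        using is_graphD[OF g] by (metis insertE insert_commute mem_Collect_eq singletonD)
      then show "e \<in> (\<lambda>w. {v,w}) ` nbrs E v" using e unfolding nbrs_def by blast
    qed
  qed (auto simp: nbrs_def)
  moreover have "inj_on (\<lambda>w. {v,w}) (nbrs E v)" unfolding inj_on_def by (auto simp: doubleton_eq_iff)
  ultimately show ?thesis unfolding deg_def by (simp add: card_image)
qed

lemma nbrs_mem_comp: "is_graph N E \<Longrightarrow> w \<in> nbrs E v \<Longrightarrow> w \<in> comp N E v"
  unfolding nbrs_def using edge_mem_comp by blast

lemma comp_isolated: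
  assumes g: "is_graph N E" and x: "x \<in> verts N" and n: "nbrs E x = {}"
  shows "comp N E x = {x}"
proof -
  have "\<And>b. (x,b) \<in> (adj E)\<^sup>* \<Longrightarrow> x = b"
  proof -
    fix b assume "(x,b) \<in> (adj E)\<^sup>*"
    then have "x = b \<or> (\<exists>z. (x,z) \<in> adj E)" by (metis converse_rtranclE)
    then show "x = b" using n nbrs_adj[OF g] by blast
  qed
  then show ?thesis using x unfolding comp_def by auto
qed

lemma nbrs_insert:
  "nbrs (insert {x,y} E) u = nbrs E u \<union> (if u = x then {y} else {}) \<union> (if u = y then {x} else {})"
  unfolding nbrs_def by (auto simp: doubleton_eq_iff)

lemma card_neq_1_if_two: "x \<in> X \<Longrightarrow> y \<in> X \<Longrightarrow> x \<noteq> y \<Longrightarrow> card X \<noteq> 1"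
  by (metis card_1_singletonE singletonD)

section \<open>Binary forests and their roots\<close>

definition is_binary_forest :: "nat \<Rightarrow> nat set set \<Rightarrow> bool" where
  "is_binary_forest N E \<longleftrightarrow> is_graph N E \<and> (\<forall>C\<in>components N E. binary_tree_comp E C)"

lemma binary_forest_iff: "binary_forest N m E \<longleftrightarrow> is_binary_forest N E \<and> card (components N E) = m"
  unfolding binary_forest_def is_binary_forest_def by auto

lemma is_binary_forest_graph: "is_binary_forest N E \<Longrightarrow> is_graph N E" unfolding is_binary_forest_def
  by simp

lemma is_binary_forest_tree: "is_binary_forest N E \<Longrightarrow> C \<in> components N E \<Longrightarrow> tree_comp E C"
  unfolding is_binary_forest_def binary_tree_comp_def by simp

lemma binary_forest_singleton:
  assumes bf: "is_binary_forest N E" and C: "C \<in> components N E" and c1: "card C = 1"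
  obtains x where "C = {x}" "deg E x = 0" "nbrs E x = {}"
proof -
  have g: "is_graph N E" using bf is_binary_forest_graph by blast
  obtain x where Cx: "C = {x}" using c1 card_1_singletonE by blast
  have x: "x \<in> verts N" using components_subset_verts[OF C] Cx by blast
  have "comp N E x = C" using comp_eq_component[OF g C] Cx by blast
  then have "nbrs E x \<subseteq> {x}" using nbrs_mem_comp[OF g] Cx by blast
  moreover have "x \<notin> nbrs E x" using nbrs_verts[OF g] by blast
  ultimately have n: "nbrs E x = {}" by blast
  then have "deg E x = 0" using deg_eq_card_nbrs[OF g] by simp
  then show ?thesis using that Cx n by blast
qed

lemma nbrs_nonempty_nonsingleton:
  assumes g: "is_graph N E" and C: "C \<in> components N E" and c1: "card C \<noteq> 1" and x: "x \<in> C"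
  shows "nbrs E x \<noteq> {}"
proof
  assume n: "nbrs E x = {}"
  have "x \<in> verts N" using components_subset_verts[OF C] x by blast
  then have "comp N E x = {x}" using comp_isolated[OF g _ n] by blast
  then have "C = {x}" using comp_eq_component[OF g C x] by simp
  then show False using c1 by simp
qed

lemma binary_forest_degrees:
  assumes bf: "is_binary_forest N E" and C: "C \<in> components N E" and c1: "card C \<noteq> 1"
  shows "\<exists>!r. r \<in> C \<and> deg E r = 2" and "\<And>u. u \<in> C \<Longrightarrow> deg E u \<noteq> 2 \<Longrightarrow> deg E u = 3 \<or> deg E u = 1"
proof -
  have "binary_tree_comp E C" using bf C unfolding is_binary_forest_def by blast
  then have "(\<exists>!r. r \<in> C \<and> deg E r = 2) \<and> (\<forall>u \<in> C. deg E u \<noteq> 2 \<longrightarrow> deg E u = 3 \<or> deg E u = 1)"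
    using c1 unfolding binary_tree_comp_def by blast
  then show "\<exists>!r. r \<in> C \<and> deg E r = 2" and "\<And>u. u \<in> C \<Longrightarrow> deg E u \<noteq> 2 \<Longrightarrow> deg E u = 3 \<or> deg E u = 1"
    by blast+
qed

text \<open>In a binary forest these are the roots: the vertex of degree 2 of each nontrivial
  component and the vertex of each trivial one.\<close>
definition forest_roots :: "nat \<Rightarrow> nat set set \<Rightarrow> nat set" where
  "forest_roots N E = {x \<in> verts N. deg E x = 0 \<or> deg E x = 2}"

lemma forest_roots_unique:
  assumes bf: "is_binary_forest N E" and C: "C \<in> components N E"
  shows "\<exists>!r. r \<in> C \<and> r \<in> forest_roots N E"
proof (cases "card C = 1")
  case True
  obtain x where x: "C = {x}" "deg E x = 0" using binary_forest_singleton[OF bf C True] by blast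
  have "x \<in> verts N" using components_subset_verts[OF C] x by blast
  then show ?thesis using x unfolding forest_roots_def by auto
next
  case False
  have g: "is_graph N E" using bf is_binary_forest_graph by blast
  obtain r where r: "r \<in> C" "deg E r = 2" and un: "\<And>r'. r' \<in> C \<Longrightarrow> deg E r' = 2 \<Longrightarrow> r' = r"
    using binary_forest_degrees(1)[OF bf C False] by blast
  have nz: "\<And>x. x \<in> C \<Longrightarrow> deg E x \<noteq> 0"
    using nbrs_nonempty_nonsingleton[OF g C False] deg_eq_card_nbrs[OF g] nbrs_finite[OF g] by simp
  show ?thesis
  proof
    show "r \<in> C \<and> r \<in> forest_roots N E"
      using r components_subset_verts[OF C] unfolding forest_roots_def by auto
    show "\<And>r'. r' \<in> C \<and> r' \<in> forest_roots N E \<Longrightarrow> r' = r"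
      using un nz unfolding forest_roots_def by blast
  qed
qed

lemma forest_root_eq:
  assumes bf: "is_binary_forest N E" and "x \<in> forest_roots N E" "y \<in> forest_roots N E"
    and "y \<in> comp N E x"
  shows "x = y"
proof -
  have x: "x \<in> verts N" using assms(2) unfolding forest_roots_def by simp
  then show ?thesis
    using forest_roots_unique[OF bf comp_in_components[OF x]] comp_self[OF x] assms(2-4) by blast
qed

lemma card_forest_roots:
  assumes bf: "is_binary_forest N E"
  shows "card (forest_roots N E) = card (components N E)"
proof -
  have g: "is_graph N E" using bf is_binary_forest_graph by blast
  have "bij_betw (comp N E) (forest_roots N E) (components N E)"
  proof (rule bij_betw_imageI)
    show "inj_on (comp N E) (forest_roots N E)"
      using forest_root_eq[OF bf] comp_self unfolding inj_on_def forest_roots_def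
        by (metis (lifting) mem_Collect_eq)
    have "C \<in> comp N E ` forest_roots N E" if "C \<in> components N E" for C
      using forest_roots_unique[OF bf that] comp_eq_component[OF g that] by (metis image_eqI)
    then show "comp N E ` forest_roots N E = components N E"
      unfolding components_def forest_roots_def by blast
  qed
  then show ?thesis by (rule bij_betw_same_card)
qed

lemma deg_non_root:
  assumes bf: "is_binary_forest N E" and x: "x \<in> verts N" and "x \<notin> forest_roots N E"
  shows "deg E x = 1 \<or> deg E x = 3"
proof -
  have C: "comp N E x \<in> components N E" using comp_in_components[OF x] .
  have "deg E x \<noteq> 0" "deg E x \<noteq> 2" using assms(3) x unfolding forest_roots_def by auto
  moreover have "card (comp N E x) \<noteq> 1"
    using binary_forest_singleton[OF bf C] comp_self[OF x] \<open>deg E x \<noteq> 0\<close> by (metis singletonD)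
  ultimately show ?thesis using binary_forest_degrees(2)[OF bf C _ comp_self[OF x]] by auto
qed

lemma tree_comp_iff: "tree_comp E C \<longleftrightarrow> card (edges_in E C) = card C - 1"
  unfolding tree_comp_def edges_in_def by simp

lemma binary_tree_comp_cong:
  assumes "binary_tree_comp E C" "edges_in E' C = edges_in E C" "\<And>u. u \<in> C \<Longrightarrow> deg E' u = deg E u"
  shows "binary_tree_comp E' C"
proof -
  have t: "tree_comp E' C" using assms(1,2) unfolding binary_tree_comp_def tree_comp_iff by simp
  have "card C = 1 \<or> ((\<exists>!r. r \<in> C \<and> deg E r = 2) \<and>
      (\<forall>u \<in> C. deg E u \<noteq> 2 \<longrightarrow> deg E u = 3 \<or> deg E u = 1))"
    using assms(1) unfolding binary_tree_comp_def by blast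
  moreover have "(\<exists>!r. r \<in> C \<and> deg E r = 2) \<longleftrightarrow> (\<exists>!r. r \<in> C \<and> deg E' r = 2)"
    using assms(3) by metis
  moreover have "(\<forall>u \<in> C. deg E u \<noteq> 2 \<longrightarrow> deg E u = 3 \<or> deg E u = 1) \<longleftrightarrow>
      (\<forall>u \<in> C. deg E' u \<noteq> 2 \<longrightarrow> deg E' u = 3 \<or> deg E' u = 1)"
    using assms(3) by simp
  ultimately show ?thesis using t unfolding binary_tree_comp_def by simp
qed

lemma binary_tree_compI:
  assumes "tree_comp E C" and "r \<in> C" and "deg E r = 2"
    and "\<And>x. x \<in> C \<Longrightarrow> x \<noteq> r \<Longrightarrow> deg E x = 1 \<or> deg E x = 3"
  shows "binary_tree_comp E C"
proof -
  have "x = r" if "x \<in> C" "deg E x = 2" for x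
    using assms(4)[OF that(1)] that(2) by (cases "x = r") auto
  then have "\<exists>!x. x \<in> C \<and> deg E x = 2" using assms(2,3) by blast
  moreover have "deg E u = 3 \<or> deg E u = 1" if "u \<in> C" "deg E u \<noteq> 2" for u
    using assms(3) assms(4)[OF that(1)] that(2) by (cases "u = r") auto
  ultimately show ?thesis using assms(1) unfolding binary_tree_comp_def by blast
qed

lemma comp_finite: "finite (comp N E u)" using finite_subset[OF comp_subset_verts verts_finite] .

section \<open>Heights in a binary tree\<close>

lemma relpow_leave_set:
  assumes "(x,z) \<in> R ^^ d" "x \<in> S" "z \<notin> S"
  shows "\<exists>p q d1 d2. p \<in> S \<and> q \<notin> S \<and> (p,q) \<in> R \<and>
    (x,p) \<in> R ^^ d1 \<and> (q,z) \<in> R ^^ d2 \<and> Suc (d1 + d2) = d"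
  using assms
proof (induction d arbitrary: z)
  case 0 then show ?case by simp
next
  case (Suc d)
  from Suc.prems(1) obtain y where xy: "(x,y) \<in> R ^^ d" and yz: "(y,z) \<in> R" by (rule relpow_Suc_E)
  show ?case
  proof (cases "y \<in> S")
    case True
    then show ?thesis using xy yz Suc.prems by fastforce
  next
    case False
    obtain p q d1 d2 where pq: "p \<in> S" "q \<notin> S" "(p,q) \<in> R" "(x,p) \<in> R ^^ d1"
      "(q,y) \<in> R ^^ d2" "Suc (d1 + d2) = d"
      using Suc.IH[OF xy Suc.prems(2) False] by blast
    have "(q,z) \<in> R ^^ Suc d2" using pq(5) yz by (rule relpow_Suc_I)
    then show ?thesis using pq by fastforce
  qed
qed

lemma forest_edge_bridge:
  assumes g: "is_graph N E" and t: "\<forall>C\<in>components N E. tree_comp E C" and e: "{y,w} \<in> E"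
  shows "w \<notin> comp N (E - {{y,w}}) y"
proof
  assume w: "w \<in> comp N (E - {{y,w}}) y"
  let ?E0 = "E - {{y,w}}"
  have g0: "is_graph N ?E0" by (rule is_graph_mono[OF g]) blast
  have yw: "y \<noteq> w" using is_graph_edge_neq[OF g e] .
  have "(y,w) \<in> adj E" using adj_iff_edge[OF g] e by simp
  then have yv: "y \<in> verts N" and wv: "w \<in> verts N" using adj_verts[OF g] by blast+
  have ins: "insert {y,w} ?E0 = E" using e by blast
  have "card (components N E) = card (components N ?E0)"
    using card_components_insert[OF g0 yv wv yw] w ins by simp
  moreover have "N \<le> card (components N ?E0) + card ?E0"
    by (rule card_verts_le_components_edges[OF g0])
  moreover have "card E + card (components N E) = N" by (rule card_edges_components_forest[OF g t])
  moreover have "card ?E0 + 1 = card E" using card_Suc_Diff1[OF is_graph_finite[OF g] e] by simp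
  ultimately show False by linarith
qed

lemma adj_leave_comp_delete_edge:
  assumes g: "is_graph N E" and e: "{y,w} \<in> E" and pq: "(p,q) \<in> adj E"
    and p: "p \<in> comp N (E - {{y,w}}) w" and q: "q \<notin> comp N (E - {{y,w}}) w"
  shows "p = w \<and> q = y"
proof -
  let ?E0 = "E - {{y,w}}"
  have g0: "is_graph N ?E0" using is_graph_mono[OF g] by blast
  have qv: "q \<in> verts N" using adj_verts[OF g pq] by blast
  have "{p,q} = {y,w}"
  proof (rule ccontr)
    assume "{p,q} \<noteq> {y,w}"
    then have "{p,q} \<in> ?E0" using pq adj_iff by blast
    then have "q \<in> comp N ?E0 p" using edge_mem_comp[OF g0] by blast
    then show False using q comp_eq_if_mem[OF g0 p] by simp
  qed
  moreover have "w \<in> comp N ?E0 w" using comp_self adj_verts[OF g] e adj_iff_edge[OF g] by blast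
  ultimately show ?thesis using q by (auto simp: doubleton_eq_iff)
qed

text \<open>Only nontrivial trees: on an isolated vertex, root_of is a THE over an empty predicate.\<close>
locale rooted_component =
  fixes N :: nat and E :: "nat set set" and C :: "nat set" and r :: nat
  assumes bf: "is_binary_forest N E" and C: "C \<in> components N E" and c1: "card C \<noteq> 1"
    and rC: "r \<in> C" and r2: "deg E r = 2"
begin

lemma g: "is_graph N E" using bf is_binary_forest_graph by blast

lemma root_unique: "x \<in> C \<Longrightarrow> deg E x = 2 \<Longrightarrow> x = r"
proof -
  assume x: "x \<in> C" "deg E x = 2"
  obtain z where z: "z \<in> C \<and> deg E z = 2" "\<And>y. y \<in> C \<and> deg E y = 2 \<Longrightarrow> y = z"
    using binary_forest_degrees(1)[OF bf C c1] by (elim ex1E) blast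
  have "x = z" using z(2) x by blast
  moreover have "r = z" using z(2) rC r2 by blast
  ultimately show "x = r" by simp
qed

lemma C_subset_verts: "C \<subseteq> verts N" using components_subset_verts[OF C] .

lemma comp_C: "x \<in> C \<Longrightarrow> comp N E x = C" by (rule comp_eq_component[OF g C])

lemma root_of_C: "x \<in> C \<Longrightarrow> root_of N E x = r"
proof -
  assume x: "x \<in> C"
  show ?thesis unfolding root_of_def
  proof (rule the_equality)
    show "r \<in> comp N E x \<and> deg E r = 2" using comp_C[OF x] rC r2 by simp
    show "\<And>z. z \<in> comp N E x \<and> deg E z = 2 \<Longrightarrow> z = r" using comp_C[OF x] root_unique by simp
  qed
qed

lemma forest_trees: "\<forall>D\<in>components N E. tree_comp E D" using is_binary_forest_tree[OF bf] by blast

lemma reach_from_root: "x \<in> C \<Longrightarrow> \<exists>d. (r,x) \<in> adj E ^^ d"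
proof -
  assume x: "x \<in> C"
  have "x \<in> comp N E r" using comp_C[OF rC] x by simp
  then have "(r,x) \<in> (adj E)\<^sup>*" by (simp add: comp_mem_iff)
  then show ?thesis by (simp add: rtrancl_power)
qed

lemma reachable_in_C: "(r,x) \<in> adj E ^^ d \<Longrightarrow> x \<in> C"
proof -
  assume "(r,x) \<in> adj E ^^ d"
  then have rx: "(r,x) \<in> (adj E)\<^sup>*" using relpow_imp_rtrancl by blast
  have "r \<in> verts N" using rC C_subset_verts by blast
  then have "x \<in> comp N E r" using rtrancl_adj_verts[OF g rx] rx by (simp add: comp_mem_iff)
  then show "x \<in> C" using comp_C[OF rC] by simp
qed

lemma height_eq_Least: "x \<in> C \<Longrightarrow> height N E x = (LEAST d. (r,x) \<in> adj E ^^ d)"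
  unfolding height_def using root_of_C by simp

lemma reach_height: "x \<in> C \<Longrightarrow> (r,x) \<in> adj E ^^ height N E x"
proof -
  assume x: "x \<in> C"
  obtain d where "(r,x) \<in> adj E ^^ d" using reach_from_root[OF x] by blast
  then have "(r,x) \<in> adj E ^^ (LEAST d. (r,x) \<in> adj E ^^ d)" by (rule LeastI)
  then show ?thesis using height_eq_Least[OF x] by simp
qed

lemma height_le: "(r,x) \<in> adj E ^^ d \<Longrightarrow> height N E x \<le> d"
  using height_eq_Least[OF reachable_in_C] Least_le by metis

lemma height_eq_0_iff: "x \<in> C \<Longrightarrow> height N E x = 0 \<longleftrightarrow> x = r"
  using reach_height height_le[of x 0] by fastforce

lemma nbrs_in_C: "x \<in> C \<Longrightarrow> w \<in> nbrs E x \<Longrightarrow> w \<in> C"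
  using nbrs_mem_comp[OF g] comp_C by blast

lemma adj_nbrs: "(x,w) \<in> adj E \<longleftrightarrow> w \<in> nbrs E x" using nbrs_adj[OF g] by simp

lemma height_exit:
  assumes x: "x \<in> C" and "r \<in> S" "x \<notin> S"
  obtains p q where "p \<in> S" "q \<notin> S" "(p,q) \<in> adj E"
    "height N E p < height N E x" "height N E q \<le> height N E x"
proof -
  obtain p q d1 d2 where pq: "p \<in> S" "q \<notin> S" "(p,q) \<in> adj E" "(r,p) \<in> adj E ^^ d1"
      "(q,x) \<in> adj E ^^ d2" "Suc (d1 + d2) = height N E x"
    using relpow_leave_set[OF reach_height[OF x] assms(2,3)] by blast
  have "height N E p \<le> d1" using height_le[OF pq(4)] .
  moreover have "height N E q \<le> Suc d1" using height_le[OF relpow_Suc_I[OF pq(4,3)]] .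
  ultimately show ?thesis using that pq(1-3,6) by simp
qed

lemma parent_exists: "x \<in> C \<Longrightarrow> x \<noteq> r \<Longrightarrow> \<exists>u\<in>nbrs E x. height N E u < height N E x"
proof -
  assume x: "x \<in> C" and xr: "x \<noteq> r"
  then obtain d where d: "height N E x = Suc d" using height_eq_0_iff not0_implies_Suc by blast
  then have "(r,x) \<in> adj E ^^ Suc d" using reach_height[OF x] by simp
  then obtain u where ru: "(r,u) \<in> adj E ^^ d" and ux: "(u,x) \<in> adj E" by (rule relpow_Suc_E)
  have "u \<in> nbrs E x" using adj_sym[OF ux] adj_nbrs by simp
  moreover have "height N E u < height N E x" using height_le[OF ru] d by simp
  ultimately show ?thesis by blast
qed

lemma children_root: "children N E r = nbrs E r"
proof
  show "children N E r \<subseteq> nbrs E r" unfolding children_def using adj_nbrs by blast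
  show "nbrs E r \<subseteq> children N E r"
  proof
    fix w assume w: "w \<in> nbrs E r"
    have "w \<noteq> r" using nbrs_verts[OF g w] by blast
    then have "height N E r < height N E w"
      using height_eq_0_iff[OF nbrs_in_C[OF rC w]] height_eq_0_iff[OF rC] by simp
    then show "w \<in> children N E r" unfolding children_def using w adj_nbrs by simp
  qed
qed

text \<open>Deleting the edge {y,w} disconnects the tree, and a shortest path from the root to
  whichever of u and w lies on the far side has to use that edge.\<close>
lemma neighbour_is_child:
  assumes y: "y \<in> C" and u: "u \<in> nbrs E y" "height N E u < height N E y"
    and w: "w \<in> nbrs E y" "w \<noteq> u"
  shows "height N E y < height N E w"
proof (rule ccontr)
  assume "\<not> height N E y < height N E w"
  then have hw: "height N E w \<le> height N E y" by simp
  let ?E0 = "E - {{y,w}}"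
  let ?S = "comp N ?E0 w"
  have e: "{y,w} \<in> E" using w(1) unfolding nbrs_def by simp
  have g0: "is_graph N ?E0" using is_graph_mono[OF g] by blast
  have wC: "w \<in> C" using nbrs_in_C[OF y w(1)] .
  have yv: "y \<in> verts N" and wv: "w \<in> verts N" using C_subset_verts y wC by blast+
  have yS: "y \<notin> ?S"
    using forest_edge_bridge[OF g forest_trees e] comp_eq_iff[OF g0 wv yv] comp_self[OF wv] by auto
  have "{y,u} \<in> ?E0" using u(1) w(2) unfolding nbrs_def by (auto simp: doubleton_eq_iff)
  then have "u \<in> comp N ?E0 y" using edge_mem_comp[OF g0] by blast
  then have uS: "u \<notin> ?S" using yS comp_eq_if_mem[OF g0] comp_self[OF yv] by metis
  have leave: "p = w \<and> q = y" if "(p,q) \<in> adj E" "p \<in> ?S" "q \<notin> ?S" for p q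
    using adj_leave_comp_delete_edge[OF g e that] .
  show False
  proof (cases "r \<in> ?S")
    case True
    obtain p q where "p \<in> ?S" "q \<notin> ?S" "(p,q) \<in> adj E" "height N E q \<le> height N E u"
      using height_exit[OF nbrs_in_C[OF y u(1)] True uS] by blast
    then show False using leave u(2) by fastforce
  next
    case False
    have "r \<in> - ?S" "w \<notin> - ?S" using False comp_self[OF wv] by auto
    then obtain p q where "p \<notin> ?S" "q \<in> ?S" "(p,q) \<in> adj E" "height N E p < height N E w"
      using height_exit[OF wC] by (metis ComplD ComplI)
    then show False using leave[OF adj_sym] hw by fastforce
  qed
qed

lemma children_nonroot:
  assumes y: "y \<in> C" and yr: "y \<noteq> r"
  obtains u where "u \<in> nbrs E y" "children N E y = nbrs E y - {u}"
proof -
  obtain u where u: "u \<in> nbrs E y" "height N E u < height N E y"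
    using parent_exists[OF y yr] by blast
  have "children N E y = nbrs E y - {u}"
    using neighbour_is_child[OF y u] u(2) adj_nbrs unfolding children_def by fastforce
  then show ?thesis using that u(1) by blast
qed
lemma card_children:
  assumes y: "y \<in> C" and int: "1 < deg E y"
  shows "card (children N E y) = 2" and "children N E y \<subseteq> nbrs E y"
proof -
  have cases: "deg E y = 2 \<or> deg E y = 3"
    using binary_forest_degrees(2)[OF bf C c1 y] int by auto
  have "card (children N E y) = 2 \<and> children N E y \<subseteq> nbrs E y"
  proof (cases "y = r")
    case True
    then show ?thesis using children_root r2 deg_eq_card_nbrs[OF g] by simp
  next
    case False
    then have "deg E y = 3" using cases root_unique y by blast
    obtain u where u: "u \<in> nbrs E y" "children N E y = nbrs E y - {u}"
      using children_nonroot[OF y False] by blast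
    have "card (nbrs E y) = 3" using \<open>deg E y = 3\<close> deg_eq_card_nbrs[OF g] by simp
    then show ?thesis using u nbrs_finite[OF g] by (simp add: card_Diff_singleton)
  qed
  then show "card (children N E y) = 2" and "children N E y \<subseteq> nbrs E y" by auto
qed

end

section \<open>Joining three components at a vertex\<close>

locale glue =
  fixes N :: nat and E :: "nat set set" and v a b :: nat
  assumes g: "is_graph N E" and v: "v \<in> verts N" and a: "a \<in> verts N" and b: "b \<in> verts N"
    and av: "a \<notin> comp N E v" and bv: "b \<notin> comp N E v" and ba: "b \<notin> comp N E a"
begin

abbreviation "E2 \<equiv> insert {v,a} (insert {v,b} E)"
abbreviation "Cv \<equiv> comp N E v"
abbreviation "Ca \<equiv> comp N E a"
abbreviation "Cb \<equiv> comp N E b"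
abbreviation "U \<equiv> Cv \<union> Ca \<union> Cb"

lemma v_in_Cv: "v \<in> Cv" and a_in_Ca: "a \<in> Ca" and b_in_Cb: "b \<in> Cb"
  using comp_self v a b by auto

lemma glued_neq: "a \<noteq> v" "b \<noteq> v" "a \<noteq> b"
  using v_in_Cv a_in_Ca b_in_Cb av bv ba by auto

lemma not_in_comps: "v \<notin> Ca" "v \<notin> Cb" "a \<notin> Cb" "a \<notin> Cv" "b \<notin> Cv" "b \<notin> Ca"
proof -
  show "a \<notin> Cv" "b \<notin> Cv" "b \<notin> Ca" using av bv ba by auto
  show "v \<notin> Ca" using comp_eq_if_mem[OF g, of v a] v_in_Cv a_in_Ca av by auto
  show "v \<notin> Cb" using comp_eq_if_mem[OF g, of v b] v_in_Cv b_in_Cb bv by auto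
  show "a \<notin> Cb" using comp_eq_if_mem[OF g, of a b] a_in_Ca b_in_Cb ba by auto
qed

lemma comps_disjoint: "Cv \<inter> Ca = {}" "Cv \<inter> Cb = {}" "Ca \<inter> Cb = {}"
proof -
  have "Cv \<noteq> Ca" "Cv \<noteq> Cb" "Ca \<noteq> Cb" using not_in_comps v_in_Cv a_in_Ca b_in_Cb by auto
  then show "Cv \<inter> Ca = {}" "Cv \<inter> Cb = {}" "Ca \<inter> Cb = {}" using comp_disjoint[OF g] by auto
qed

lemma is_graph_E1: "is_graph N (insert {v,b} E)" using is_graph_insert[OF g v b] glued_neq by simp
lemma is_graph_E2: "is_graph N E2" using is_graph_insert[OF is_graph_E1 v a] glued_neq by simp

lemma comp_E1:
  "u \<in> verts N \<Longrightarrow> comp N (insert {v,b} E) u = (if u \<in> Cv \<union> Cb then Cv \<union> Cb else comp N E u)"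
  using comp_insert[OF g v b] glued_neq by simp

lemma comp_E2: "u \<in> verts N \<Longrightarrow> comp N E2 u = (if u \<in> U then U else comp N E u)"
  using comp_insert[OF is_graph_E1 v a _ _, of u] comp_E1[OF v] comp_E1[OF a] comp_E1[of u] glued_neq
    v_in_Cv not_in_comps by (auto simp: Un_ac)

lemma other_comp_disjoint: "X \<in> components N E \<Longrightarrow> X \<noteq> Cv \<Longrightarrow> X \<noteq> Ca \<Longrightarrow> X \<noteq> Cb \<Longrightarrow> X \<inter> U = {}"
proof -
  assume X: "X \<in> components N E" "X \<noteq> Cv" "X \<noteq> Ca" "X \<noteq> Cb"
  then obtain u where u: "u \<in> verts N" "X = comp N E u" unfolding components_def by blast
  have "X \<inter> Cv = {}" "X \<inter> Ca = {}" "X \<inter> Cb = {}" using comp_disjoint[OF g] u X by auto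
  then show "X \<inter> U = {}" by blast
qed

lemma components_E2: "components N E2 = insert U (components N E - {Cv, Ca, Cb})"
proof
  show "components N E2 \<subseteq> insert U (components N E - {Cv, Ca, Cb})"
  proof
    fix C assume "C \<in> components N E2"
    then obtain u where u: "u \<in> verts N" "C = comp N E2 u" unfolding components_def by blast
    show "C \<in> insert U (components N E - {Cv, Ca, Cb})"
    proof (cases "u \<in> U")
      case True then show ?thesis using u comp_E2[OF u(1)] by simp
    next
      case False
      then have "comp N E u \<noteq> Cv" "comp N E u \<noteq> Ca" "comp N E u \<noteq> Cb"
        using comp_self[OF u(1)] by auto
      then show ?thesis using u comp_E2[OF u(1)] False comp_in_components[OF u(1)] by simp
    qed
  qed
  show "insert U (components N E - {Cv, Ca, Cb}) \<subseteq> components N E2"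
  proof
    fix C assume C: "C \<in> insert U (components N E - {Cv, Ca, Cb})"
    show "C \<in> components N E2"
    proof (cases "C = U")
      case True
      then have "C = comp N E2 v" using comp_E2[OF v] v_in_Cv by simp
      then show ?thesis using comp_in_components[OF v] by simp
    next
      case False
      then have C1: "C \<in> components N E" "C \<noteq> Cv" "C \<noteq> Ca" "C \<noteq> Cb" using C by auto
      then obtain u where u: "u \<in> verts N" "C = comp N E u" unfolding components_def by blast
      have "u \<notin> U" using other_comp_disjoint[OF C1] u comp_self[OF u(1)] by blast
      then have "C = comp N E2 u" using comp_E2[OF u(1)] u by simp
      then show ?thesis using comp_in_components[OF u(1)] by simp
    qed
  qed
qed

lemma card_components_E2: "card (components N E2) + 2 = card (components N E)"
proof -
  have "card (components N (insert {v,b} E)) = card (components N E) - 1"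
    using card_components_insert[OF g v b] glued_neq bv by simp
  moreover have "card (components N E2) = card (components N (insert {v,b} E)) - 1"
    using card_components_insert[OF is_graph_E1 v a] comp_E1[OF v] v_in_Cv not_in_comps glued_neq by simp
  moreover have "{Cv, Ca} \<subseteq> components N E" "Cv \<noteq> Ca"
    using comp_in_components v a v_in_Cv not_in_comps by auto
  then have "2 \<le> card (components N E)" using card_mono[of "components N E" "{Cv, Ca}"] by simp
  ultimately show ?thesis by linarith
qed

lemma nbrs_E2:
  "nbrs E2 u = nbrs E u \<union> (if u = v then {a,b} else {}) \<union> (if u = a \<or> u = b then {v} else {})"
  using glued_neq by (auto simp: nbrs_insert)

lemma not_in_nbrs: "a \<notin> nbrs E v" "b \<notin> nbrs E v" "v \<notin> nbrs E a" "v \<notin> nbrs E b"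
proof -
  show "a \<notin> nbrs E v" using nbrs_mem_comp[OF g, of a v] not_in_comps by blast
  show "b \<notin> nbrs E v" using nbrs_mem_comp[OF g, of b v] not_in_comps by blast
  show "v \<notin> nbrs E a" using nbrs_mem_comp[OF g, of v a] not_in_comps by blast
  show "v \<notin> nbrs E b" using nbrs_mem_comp[OF g, of v b] not_in_comps by blast
qed

lemma deg_E2_v: "deg E2 v = deg E v + 2"
proof -
  have "nbrs E2 v = insert a (insert b (nbrs E v))" using nbrs_E2 glued_neq by auto
  then show ?thesis
    using deg_eq_card_nbrs[OF is_graph_E2] deg_eq_card_nbrs[OF g] nbrs_finite[OF g] not_in_nbrs glued_neq
    by simp
qed

lemma deg_E2_a: "deg E2 a = deg E a + 1"
proof -
  have "nbrs E2 a = insert v (nbrs E a)" using nbrs_E2 glued_neq by auto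
  then show ?thesis
    using deg_eq_card_nbrs[OF is_graph_E2] deg_eq_card_nbrs[OF g] nbrs_finite[OF g] not_in_nbrs
    by simp
qed

lemma deg_E2_b: "deg E2 b = deg E b + 1"
proof -
  have "nbrs E2 b = insert v (nbrs E b)" using nbrs_E2 glued_neq by auto
  then show ?thesis
    using deg_eq_card_nbrs[OF is_graph_E2] deg_eq_card_nbrs[OF g] nbrs_finite[OF g] not_in_nbrs
    by simp
qed

lemma deg_E2_other: "u \<noteq> v \<Longrightarrow> u \<noteq> a \<Longrightarrow> u \<noteq> b \<Longrightarrow> deg E2 u = deg E u"
  using nbrs_E2[of u] deg_eq_card_nbrs[OF is_graph_E2] deg_eq_card_nbrs[OF g] by simp

lemma edges_in_E2_other:
  "X \<in> components N E \<Longrightarrow> X \<noteq> Cv \<Longrightarrow> X \<noteq> Ca \<Longrightarrow> X \<noteq> Cb \<Longrightarrow> edges_in E2 X = edges_in E X"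
  using other_comp_disjoint v_in_Cv unfolding edges_in_def by blast

lemma edges_in_E2_U: "edges_in E2 U = edges_in E Cv \<union> edges_in E Ca \<union> edges_in E Cb \<union> {{v,a},{v,b}}"
proof
  show "edges_in E2 U \<subseteq> edges_in E Cv \<union> edges_in E Ca \<union> edges_in E Cb \<union> {{v,a},{v,b}}"
  proof
    fix e assume e: "e \<in> edges_in E2 U"
    show "e \<in> edges_in E Cv \<union> edges_in E Ca \<union> edges_in E Cb \<union> {{v,a},{v,b}}"
    proof (cases "e \<in> E")
      case True
      obtain p q where pq: "e = {p,q}" using is_graphD[OF g True] by blast
      have "p \<in> U" using e pq unfolding edges_in_def by auto
      then have "comp N E p = Cv \<or> comp N E p = Ca \<or> comp N E p = Cb"
        using comp_eq_if_mem[OF g] by blast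
      then show ?thesis using edge_subset_comp[OF g True] pq True unfolding edges_in_def by auto
    qed (use e in \<open>auto simp: edges_in_def\<close>)
  qed
qed (use v_in_Cv a_in_Ca b_in_Cb in \<open>auto simp: edges_in_def\<close>)

lemma card_edges_in_E2_U:
  "card (edges_in E2 U) = card (edges_in E Cv) + card (edges_in E Ca) + card (edges_in E Cb) + 2"
proof -
  note fin = finite_edges_in[OF g]
  have "card (edges_in E2 U) = card (edges_in E Cv \<union> edges_in E Ca
      \<union> edges_in E Cb) + card {{v,a},{v,b}}"
    unfolding edges_in_E2_U using not_in_comps fin
      by (intro card_Un_disjoint) (auto simp: edges_in_def)
  also have "card (edges_in E Cv \<union> edges_in E Ca \<union> edges_in E Cb)
      = card (edges_in E Cv) + card (edges_in E Ca) + card (edges_in E Cb)"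
    using edges_in_disjoint[OF g] comps_disjoint fin by (simp add: card_Un_disjoint Int_Un_distrib2)
  also have "card {{v,a},{v,b}} = 2" using glued_neq by (simp add: doubleton_eq_iff)
  finally show ?thesis .
qed

lemma glue_swap: "glue N E v b a"
proof
  show "is_graph N E" "v \<in> verts N" "b \<in> verts N" "a \<in> verts N" "b \<notin> Cv" "a \<notin> Cv" "a \<notin> Cb"
    using g v a b bv av not_in_comps by auto
qed

lemma E2_comm: "insert {v,b} (insert {v,a} E) = E2" by (simp add: insert_commute)

lemma new_edges_notin: "{v,a} \<notin> E" "{v,b} \<notin> E"
proof -
  show "{v,a} \<notin> E" using edge_mem_comp[OF g, of v a] not_in_comps(4) by auto
  show "{v,b} \<notin> E" using edge_mem_comp[OF g, of v b] not_in_comps(5) by auto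
qed

lemma attached_edges_eq: "{{v,w} | w. w \<in> {a,b}} = {{v,a},{v,b}}" by blast

lemma E2_eq: "E \<union> {{v,w} | w. w \<in> {a,b}} = E2" unfolding attached_edges_eq by blast

lemma E2_minus: "E2 - {{v,w} | w. w \<in> {a,b}} = E" unfolding attached_edges_eq using new_edges_notin by blast

lemma binary_tree_comp_E2_other:
  assumes "X \<in> components N E" "X \<noteq> Cv" "X \<noteq> Ca" "X \<noteq> Cb"
  shows "binary_tree_comp E2 X \<longleftrightarrow> binary_tree_comp E X"
proof -
  have "u \<noteq> v" "u \<noteq> a" "u \<noteq> b" if "u \<in> X" for u
    using other_comp_disjoint[OF assms] that v_in_Cv a_in_Ca b_in_Cb by blast+
  then have "deg E2 u = deg E u" if "u \<in> X" for u using deg_E2_other that by simp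
  then show ?thesis
    using binary_tree_comp_cong[of E X E2] binary_tree_comp_cong[of E2 X E] edges_in_E2_other[OF assms]
    by auto
qed

lemma card_U: "card U = card Cv + card Ca + card Cb"
  using comps_disjoint comp_finite by (simp add: card_Un_disjoint Int_Un_distrib2)

lemma adj_E2_leave_Ca: "(p,q) \<in> adj E2 \<Longrightarrow> p \<in> Ca \<Longrightarrow> q \<notin> Ca \<Longrightarrow> p = a \<and> q = v"
proof -
  assume pq: "(p,q) \<in> adj E2" "p \<in> Ca" "q \<notin> Ca"
  have e: "{p,q} \<in> E2" using pq(1) adj_iff by simp
  show "p = a \<and> q = v"
  proof (cases "{p,q} \<in> E")
    case True
    then have "q \<in> comp N E p" by (rule edge_mem_comp[OF g])
    moreover have "comp N E p = Ca" using comp_eq_if_mem[OF g pq(2)] .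
    ultimately show ?thesis using pq(3) by simp
  next
    case False
    then have "{p,q} = {v,a} \<or> {p,q} = {v,b}" using e by blast
    moreover have "v \<notin> Ca" "b \<notin> Ca" using not_in_comps by auto
    ultimately show ?thesis using pq(2,3) a_in_Ca unfolding doubleton_eq_iff by blast
  qed
qed

lemma adj_E2_leave_Cv: "(p,q) \<in> adj E2 \<Longrightarrow> p \<in> Cv \<Longrightarrow> q \<notin> Cv \<Longrightarrow> p = v"
proof -
  assume pq: "(p,q) \<in> adj E2" "p \<in> Cv" "q \<notin> Cv"
  have e: "{p,q} \<in> E2" using pq(1) adj_iff by simp
  show "p = v"
  proof (cases "{p,q} \<in> E")
    case True
    then have "q \<in> comp N E p" by (rule edge_mem_comp[OF g])
    moreover have "comp N E p = Cv" using comp_eq_if_mem[OF g pq(2)] .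
    ultimately show ?thesis using pq(3) by simp
  next
    case False
    then have "{p,q} = {v,a} \<or> {p,q} = {v,b}" using e by blast
    moreover have "a \<notin> Cv" "b \<notin> Cv" using not_in_comps by auto
    ultimately show ?thesis using pq(2,3) unfolding doubleton_eq_iff by blast
  qed
qed

lemma U_in_components_E2: "U \<in> components N E2"
  using components_E2 by simp

lemma card_U_neq_1: "card U \<noteq> 1"
proof -
  have "{v,a,b} \<subseteq> U" using v_in_Cv a_in_Ca b_in_Cb by blast
  then have "card {v,a,b} \<le> card U" using comp_finite by (intro card_mono) auto
  then show ?thesis using glued_neq by simp
qed

lemma height_v_less_children:
  assumes rc: "rooted_component N E2 U r" and r: "r \<in> Cv" and x: "x = a \<or> x = b"
  shows "height N E2 v < height N E2 x"
proof -
  have "x \<in> U" "x \<notin> Cv" using x a_in_Ca b_in_Cb not_in_comps by blast+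
  then obtain p q where "p \<in> Cv" "q \<notin> Cv" "(p,q) \<in> adj E2" "height N E2 p < height N E2 x"
    using rooted_component.height_exit[OF rc _ r] by blast
  then show ?thesis using adj_E2_leave_Cv by blast
qed

lemma height_a_less_v:
  assumes rc: "rooted_component N E2 U r" and r: "r \<in> Ca"
  shows "height N E2 a < height N E2 v"
proof -
  have "v \<in> U" "v \<notin> Ca" using v_in_Cv not_in_comps by blast+
  then obtain p q where "p \<in> Ca" "q \<notin> Ca" "(p,q) \<in> adj E2" "height N E2 p < height N E2 v"
    using rooted_component.height_exit[OF rc _ r] by blast
  then show ?thesis using adj_E2_leave_Ca by blast
qed

end

section \<open>Attaching two roots to a vertex of degree at most one\<close>

locale glue_roots = glue +
  assumes bf: "is_binary_forest N E" and dv: "deg E v \<le> 1"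
    and da: "a \<in> forest_roots N E" and db: "b \<in> forest_roots N E"
begin

definition root_U where "root_U = (THE r. r \<in> Cv \<and> r \<in> forest_roots N E)"

lemma root_U: "root_U \<in> Cv" "root_U \<in> forest_roots N E"
  "\<And>x. x \<in> Cv \<Longrightarrow> x \<in> forest_roots N E \<Longrightarrow> x = root_U"
proof -
  have "\<exists>!r. r \<in> Cv \<and> r \<in> forest_roots N E"
    using forest_roots_unique[OF bf comp_in_components[OF v]] .
  then show "root_U \<in> Cv" "root_U \<in> forest_roots N E"
    "\<And>x. x \<in> Cv \<Longrightarrow> x \<in> forest_roots N E \<Longrightarrow> x = root_U"
    unfolding root_U_def by (metis (no_types, lifting) theI)+
qed

lemma deg_E2_root_U: "deg E2 root_U = 2"
proof (cases "root_U = v")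
  case True
  then show ?thesis using root_U(2) dv deg_E2_v unfolding forest_roots_def by auto
next
  case False
  have "root_U \<noteq> a" "root_U \<noteq> b" using root_U(1) not_in_comps by blast+
  moreover have "deg E root_U \<noteq> 0"
  proof
    assume "deg E root_U = 0"
    then have "comp N E root_U = {root_U}"
      using comp_isolated[OF g] root_U(2) deg_eq_card_nbrs[OF g] nbrs_finite[OF g]
      unfolding forest_roots_def by simp
    then show False using comp_eq_if_mem[OF g root_U(1)] v_in_Cv False by auto
  qed
  ultimately show ?thesis using root_U(2) deg_E2_other[OF False] unfolding forest_roots_def by auto
qed

lemma deg_E2_off_root_U:
  assumes x: "x \<in> U" and xr: "x \<noteq> root_U"
  shows "deg E2 x = 1 \<or> deg E2 x = 3"
proof -
  have other: "deg E2 y = 1 \<or> deg E2 y = 3"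
    if "y \<in> verts N" "y \<notin> forest_roots N E" "y \<noteq> v" "y \<noteq> a" "y \<noteq> b" for y
    using deg_E2_other[OF that(3-5)] deg_non_root[OF bf that(1,2)] by simp
  consider "x = a" | "x = b" | "x = v" | "x \<in> Cv" "x \<noteq> v" | "x \<in> Ca" "x \<noteq> a" | "x \<in> Cb" "x \<noteq> b"
    using x by blast
  then show ?thesis
  proof cases
    case 3
    then have "v \<notin> forest_roots N E" using root_U(3)[OF v_in_Cv] xr by blast
    then have "deg E v \<noteq> 0" using v unfolding forest_roots_def by simp
    then have "deg E v = 1" using dv by simp
    then show ?thesis using 3 deg_E2_v by simp
  next
    case 4
    then show ?thesis using other root_U(3) xr not_in_comps comp_subset_verts by blast
  next
    case 5
    then have "x \<notin> forest_roots N E" using forest_root_eq[OF bf da] by blast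
    then show ?thesis using 5 other not_in_comps comp_subset_verts by blast
  next
    case 6
    then have "x \<notin> forest_roots N E" using forest_root_eq[OF bf db] by blast
    then show ?thesis using 6 other not_in_comps comp_subset_verts by blast
  qed (use deg_E2_a deg_E2_b da db in \<open>auto simp: forest_roots_def\<close>)
qed

lemma tree_comp_E2_U: "tree_comp E2 U"
proof -
  have "card (edges_in E X) + 1 = card X" if "X \<in> components N E" for X
    using is_binary_forest_tree[OF bf that] card_component_pos[OF that] tree_comp_iff by fastforce
  then have "card (edges_in E Cv) + 1 = card Cv" "card (edges_in E Ca) + 1 = card Ca"
    "card (edges_in E Cb) + 1 = card Cb" using comp_in_components v a b by blast+
  then show ?thesis unfolding tree_comp_iff card_edges_in_E2_U card_U by linarith
qed

lemma is_binary_forest_E2: "is_binary_forest N E2"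
  unfolding is_binary_forest_def
proof (intro conjI ballI)
  show "is_graph N E2" by (rule is_graph_E2)
  fix C assume C: "C \<in> components N E2"
  have "binary_tree_comp E2 U"
    using binary_tree_compI[OF tree_comp_E2_U _ deg_E2_root_U deg_E2_off_root_U] root_U(1) by blast
  then show "binary_tree_comp E2 C"
    using C components_E2 binary_tree_comp_E2_other bf unfolding is_binary_forest_def by auto
qed

lemma rooted_component_E2: "rooted_component N E2 U root_U"
  using is_binary_forest_E2 U_in_components_E2 card_U_neq_1 root_U(1) deg_E2_root_U
  by unfold_locales auto

lemma children_E2_v: "children N E2 v = {a,b}"
proof -
  have vU: "v \<in> U" using v_in_Cv by blast
  have int: "1 < deg E2 v" using deg_E2_v by simp
  have c2: "card (children N E2 v) = 2"
    using rooted_component.card_children(1)[OF rooted_component_E2 vU int] .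
  have sub: "{a,b} \<subseteq> children N E2 v"
  proof -
    have "height N E2 v < height N E2 a" "height N E2 v < height N E2 b"
      using height_v_less_children[OF rooted_component_E2 root_U(1)] by auto
    moreover have "(v,a) \<in> adj E2" "(v,b) \<in> adj E2" using adj_iff glued_neq by auto
    ultimately show ?thesis unfolding children_def by blast
  qed
  have "finite (children N E2 v)" using c2 card_gt_0_iff[of "children N E2 v"] by simp
  then show ?thesis using card_subset_eq[OF _ sub] c2 glued_neq by simp
qed

end

section \<open>Detaching the children of an internal vertex\<close>

locale glued_forest = glue +
  fixes r :: nat
  assumes is_binary_forest_E2: "is_binary_forest N E2"
    and r_in_Cv: "r \<in> Cv" and deg_E2_r: "deg E2 r = 2"
begin

lemma glued_forest_swap: "glued_forest N E v b a r"
proof -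
  have "is_binary_forest N (insert {v,b} (insert {v,a} E))"
    using is_binary_forest_E2 E2_comm by simp
  then show ?thesis using glue_swap r_in_Cv deg_E2_r E2_comm
    unfolding glued_forest_def glued_forest_axioms_def by simp
qed

lemma rooted_component_U: "rooted_component N E2 U r"
proof
  show "is_binary_forest N E2" by (rule is_binary_forest_E2)
  show "U \<in> components N E2" by (rule U_in_components_E2)
  show "card U \<noteq> 1" by (rule card_U_neq_1)
  show "r \<in> U" using r_in_Cv by blast
  show "deg E2 r = 2" by (rule deg_E2_r)
qed

lemma r_neq_a_b: "r \<noteq> a" "r \<noteq> b" using r_in_Cv not_in_comps by blast+

lemma deg_E2_off_root: "x \<in> U \<Longrightarrow> x \<noteq> r \<Longrightarrow> deg E2 x = 1 \<or> deg E2 x = 3"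
  using binary_forest_degrees(2)[OF is_binary_forest_E2 U_in_components_E2 card_U_neq_1]
    rooted_component.root_unique[OF rooted_component_U] by fastforce

lemma deg_a_root: "deg E a = 0 \<or> deg E a = 2"
  using deg_E2_off_root[of a] a_in_Ca r_neq_a_b deg_E2_a by auto

lemma binary_tree_comp_Ca:
  assumes t: "tree_comp E Ca"
  shows "binary_tree_comp E Ca"
proof (cases "deg E a = 0")
  case True
  then have "Ca = {a}" using comp_isolated[OF g a] deg_eq_card_nbrs[OF g] nbrs_finite[OF g] by simp
  then show ?thesis using t unfolding binary_tree_comp_def by simp
next
  case False
  then have "deg E a = 2" using deg_a_root by simp
  moreover have "deg E x = 1 \<or> deg E x = 3" if "x \<in> Ca" "x \<noteq> a" for x
  proof -
    have "x \<noteq> v" "x \<noteq> b" "x \<noteq> r" using that not_in_comps comps_disjoint r_in_Cv by blast+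
    then show ?thesis using deg_E2_other[of x] deg_E2_off_root[of x] that by simp
  qed
  ultimately show ?thesis using binary_tree_compI[OF t a_in_Ca] by blast
qed

lemma binary_tree_comp_Cv:
  assumes t: "tree_comp E Cv"
  shows "binary_tree_comp E Cv"
proof (cases "v = r")
  case True
  then have "deg E v = 0" using deg_E2_r deg_E2_v by simp
  then have "Cv = {v}" using comp_isolated[OF g v] deg_eq_card_nbrs[OF g] nbrs_finite[OF g] by simp
  then show ?thesis using t unfolding binary_tree_comp_def by simp
next
  case False
  have "r \<noteq> a" "r \<noteq> b" using r_neq_a_b by blast+
  then have "deg E r = 2" using deg_E2_r deg_E2_other False by simp
  moreover have "deg E x = 1 \<or> deg E x = 3" if "x \<in> Cv" "x \<noteq> r" for x
  proof (cases "x = v")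
    case True
    then show ?thesis using deg_E2_off_root[of v] v_in_Cv False deg_E2_v by force
  next
    case xv: False
    have "x \<noteq> a" "x \<noteq> b" using that not_in_comps by blast+
    then show ?thesis using deg_E2_other[OF xv] deg_E2_off_root[of x] that by simp
  qed
  ultimately show ?thesis using binary_tree_compI[OF t r_in_Cv] by blast
qed

text \<open>A connected graph on c vertices has at least c - 1 edges; as U has exactly
  |U| - 1 = |Cv| + |Ca| + |Cb| - 1 edges, of which two are new, each part is a tree.\<close>
lemma tree_comp_Cv_Ca_Cb: "tree_comp E Cv" "tree_comp E Ca" "tree_comp E Cb"
proof -
  have "card (edges_in E2 U) + 1 = card U"
    using is_binary_forest_tree[OF is_binary_forest_E2 U_in_components_E2] tree_comp_iff
      card_component_pos[OF U_in_components_E2] by fastforce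
  moreover have "card X \<le> card (edges_in E X) + 1 \<and> 0 < card X" if "X \<in> components N E" for X
    using card_component_le_edges[OF g that] card_component_pos[OF that] by blast
  then have "card Cv \<le> card (edges_in E Cv) + 1 \<and> 0 < card Cv"
    "card Ca \<le> card (edges_in E Ca) + 1 \<and> 0 < card Ca"
    "card Cb \<le> card (edges_in E Cb) + 1 \<and> 0 < card Cb" using comp_in_components v a b by blast+
  ultimately have "card (edges_in E Cv) = card Cv - 1 \<and> card (edges_in E Ca) = card Ca - 1
      \<and> card (edges_in E Cb) = card Cb - 1"
    unfolding card_edges_in_E2_U card_U by linarith
  then show "tree_comp E Cv" "tree_comp E Ca" "tree_comp E Cb" unfolding tree_comp_iff by simp_all
qed

lemma is_binary_forest_E: "is_binary_forest N E"
  unfolding is_binary_forest_def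
proof (intro conjI ballI)
  show "is_graph N E" by (rule g)
  fix X assume X: "X \<in> components N E"
  have "binary_tree_comp E Cb"
    using glued_forest.binary_tree_comp_Ca[OF glued_forest_swap] tree_comp_Cv_Ca_Cb by simp
  then show "binary_tree_comp E X"
    using X binary_tree_comp_Cv binary_tree_comp_Ca tree_comp_Cv_Ca_Cb components_E2
      binary_tree_comp_E2_other is_binary_forest_E2 unfolding is_binary_forest_def by blast
qed


lemma deg_v_le_1: "deg E v \<le> 1"
  using deg_E2_off_root[of v] deg_E2_r deg_E2_v v_in_Cv by (cases "v = r") auto

lemma glue_roots_E: "glue_roots N E v a b"
  using glue_axioms is_binary_forest_E deg_v_le_1 deg_a_root glued_forest.deg_a_root[OF glued_forest_swap] a b
  unfolding glue_roots_def glue_roots_axioms_def forest_roots_def by auto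
end

text \<open>Deleting two edges at v from a forest creates two new components, so v, a and b must end
  up in three different ones.\<close>
lemma forest_delete_two_edges_glue:
  assumes g': "is_graph N E'" and t: "\<forall>C\<in>components N E'. tree_comp E' C"
    and e: "{v,a} \<in> E'" "{v,b} \<in> E'" and ab: "a \<noteq> b"
  shows "glue N (E' - {{v,a},{v,b}}) v a b"
proof -
  define E where "E = E' - {{v,a},{v,b}}"
  have "(v,a) \<in> adj E'" "(v,b) \<in> adj E'" using e adj_iff_edge[OF g'] by blast+
  then have v: "v \<in> verts N" and av: "a \<in> verts N" "a \<noteq> v" and bv: "b \<in> verts N" "b \<noteq> v"
    using adj_verts[OF g'] adj_iff by blast+
  have g: "is_graph N E" unfolding E_def by (rule is_graph_mono[OF g']) blast
  have ins: "insert {v,a} (insert {v,b} E) = E'" unfolding E_def using e by blast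
  have "{v,a} \<notin> E" "{v,b} \<notin> E" "{v,a} \<noteq> {v,b}"
    unfolding E_def using ab by (auto simp: doubleton_eq_iff)
  then have cardE: "card E + 2 = card E'" using ins is_graph_finite[OF g] by force
  have low: "N \<le> card (components N E) + card E" by (rule card_verts_le_components_edges[OF g])
  have eq': "card E' + card (components N E') = N" by (rule card_edges_components_forest[OF g' t])
  let ?E1 = "insert {v,b} E"
  have g1: "is_graph N ?E1" using is_graph_insert[OF g v bv(1)] bv by simp
  have c1: "card (components N ?E1)
      = (if b \<in> comp N E v then card (components N E) else card (components N E) - 1)"
    using card_components_insert[OF g v bv(1)] bv by simp
  have c2: "card (components N E')
      = (if a \<in> comp N ?E1 v then card (components N ?E1) else card (components N ?E1) - 1)"
    using card_components_insert[OF g1 v av(1)] av ins by simp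
  have nb: "b \<notin> comp N E v" and na1: "a \<notin> comp N ?E1 v"
    using c1 c2 low eq' cardE by (auto split: if_splits)
  have comp1v: "comp N ?E1 v = comp N E v \<union> comp N E b"
    using comp_insert[OF g v bv(1) _ v] bv comp_self[OF v] by simp
  have nba: "b \<notin> comp N E a"
  proof
    assume "b \<in> comp N E a"
    then have "a \<in> comp N E b" using comp_eq_if_mem[OF g] comp_self[OF av(1)] by blast
    then show False using na1 comp1v by blast
  qed
  show ?thesis unfolding E_def[symmetric]
    using g v av(1) bv(1) na1 comp1v nb nba by unfold_locales auto
qed

lemma rooted_component_of_internal:
  assumes bf: "is_binary_forest N E" and v: "v \<in> verts N" and int: "1 < deg E v"
  obtains r where "rooted_component N E (comp N E v) r"
proof -
  have g: "is_graph N E" using bf by (rule is_binary_forest_graph)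
  have C: "comp N E v \<in> components N E" using comp_in_components[OF v] .
  obtain w where w: "w \<in> nbrs E v" using int deg_eq_card_nbrs[OF g] by fastforce
  have "card (comp N E v) \<noteq> 1"
    using card_neq_1_if_two[OF nbrs_mem_comp[OF g w] comp_self[OF v]] nbrs_verts[OF g w] by blast
  then show ?thesis
    using that binary_forest_degrees(1)[OF bf C] bf C by (meson rooted_component.intro)
qed

lemma children_internal:
  assumes bf: "is_binary_forest N E" and v: "v \<in> verts N" and int: "1 < deg E v"
  obtains a b where "a \<noteq> b" "children N E v = {a,b}" "{v,a} \<in> E" "{v,b} \<in> E"
proof -
  obtain r where rc: "rooted_component N E (comp N E v) r"
    using rooted_component_of_internal[OF assms] .
  have "card (children N E v) = 2" "children N E v \<subseteq> nbrs E v"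
    using rooted_component.card_children[OF rc comp_self[OF v] int] by auto
  then show ?thesis using that unfolding card_2_iff nbrs_def by auto
qed

text \<open>The root of the tree of v stays in the part of v because the children lie higher
  than v.\<close>
lemma children_decompose:
  assumes bf': "is_binary_forest N E'" and v: "v \<in> verts N" and int: "1 < deg E' v"
  obtains a b where "children N E' v = {a,b}" "glue_roots N (E' - {{v,a},{v,b}}) v a b"
    "insert {v,a} (insert {v,b} (E' - {{v,a},{v,b}})) = E'"
proof -
  obtain a b where ab: "a \<noteq> b" "children N E' v = {a,b}" and e: "{v,a} \<in> E'" "{v,b} \<in> E'"
    using children_internal[OF assms] .
  define E where "E = E' - {{v,a},{v,b}}"
  have "\<forall>C\<in>components N E'. tree_comp E' C" using is_binary_forest_tree[OF bf'] by blast
  then have gl: "glue N E v a b" unfolding E_def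
    using forest_delete_two_edges_glue[OF is_binary_forest_graph[OF bf'] _ e ab(1)] by blast
  interpret glue N E v a b by (rule gl)
  have E2: "E2 = E'" unfolding E_def using e by blast
  obtain r where "rooted_component N E' (comp N E' v) r"
    using rooted_component_of_internal[OF assms] .
  then have rc: "rooted_component N E2 U r" using E2 comp_E2[OF v] v_in_Cv by simp
  have r: "r \<in> U" "deg E2 r = 2" using rooted_component.rC[OF rc] rooted_component.r2[OF rc] .
  have hv: "height N E2 v < height N E2 a" "height N E2 v < height N E2 b"
    using ab(2) E2 unfolding children_def by auto
  have "r \<notin> Ca" using height_a_less_v[OF rc] hv by auto
  moreover have "r \<notin> Cb"
    using glue.height_a_less_v[OF glue_swap, of r] rc hv E2_comm by (auto simp: Un_ac)
  ultimately have "glued_forest N E v a b r"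
    using gl r rooted_component.bf[OF rc] unfolding glued_forest_def glued_forest_axioms_def
    by blast
  then have "glue_roots N E v a b" by (rule glued_forest.glue_roots_E)
  then show ?thesis using that ab(2) E2 unfolding E_def by blast
qed

section \<open>Labelled forests and the map R\<close>

lemma mem_labeled_forests: "(E, lab) \<in> labeled_forests m N \<longleftrightarrow> binary_forest N m E \<and>
      bij_betw lab (internal N E) {1..(N - m) div 2} \<and> (\<forall>v. v \<notin> internal N E \<longrightarrow> lab v = 0)"
  unfolding labeled_forests_def by simp

lemma top_vertex_eq:
  assumes lab: "bij_betw lab (internal N E) {1..L}" and v: "v \<in> internal N E" "lab v = L"
  shows "top_vertex N E lab = v"
  unfolding top_vertex_def
proof (rule the_equality)
  show "v \<in> internal N E \<and> (\<forall>u\<in>internal N E. lab u \<le> lab v)"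
    using v lab by (auto simp: bij_betw_def)
  fix x assume x: "x \<in> internal N E \<and> (\<forall>u\<in>internal N E. lab u \<le> lab x)"
  then have "lab x \<le> L" and "lab v \<le> lab x" using v lab by (auto simp: bij_betw_def)
  then have "lab x = lab v" using v(2) by simp
  then show "x = v" using lab x v by (auto simp: bij_betw_def inj_on_def)
qed

context glue_roots
begin

lemma internal_E2: "internal N E2 = insert v (internal N E)"
  and v_notin_internal: "v \<notin> internal N E"
proof -
  show "v \<notin> internal N E" using dv unfolding internal_def by auto
  have "deg E a = 0 \<or> deg E a = 2" "deg E b = 0 \<or> deg E b = 2"
    using da db unfolding forest_roots_def by auto
  then have "x \<in> internal N E2 \<longleftrightarrow> x \<in> insert v (internal N E)" for x
    using deg_E2_v deg_E2_a deg_E2_b deg_E2_other[of x] v a b unfolding internal_def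
    by (cases "x = v \<or> x = a \<or> x = b") auto
  then show "internal N E2 = insert v (internal N E)" by blast
qed

lemma binary_forest_E2:
  assumes "binary_forest N (m + 2) E" shows "binary_forest N m E2"
proof -
  have "card (components N E) = m + 2" using assms by (simp add: binary_forest_iff)
  then have "card (components N E2) = m" using card_components_E2 by linarith
  then show ?thesis using is_binary_forest_E2 by (simp add: binary_forest_iff)
qed

lemma labeling_E2:
  assumes "bij_betw lab (internal N E) {1..L}"
  shows "bij_betw (lab(v := Suc L)) (internal N E2) {1..Suc L}"
proof -
  have "bij_betw (lab(v := Suc L)) (internal N E) {1..L}"
    using assms v_notin_internal by (subst bij_betw_cong) auto
  then have "bij_betw (lab(v := Suc L)) (internal N E \<union> {v}) ({1..L} \<union> {Suc L})"
    by (intro bij_betw_combine) (auto simp: v_notin_internal)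
  then show ?thesis using internal_E2 by (simp add: atLeastAtMostSuc_conv)
qed

lemma labeling_E2_inverse:
  assumes "bij_betw lab (internal N E2) {1..Suc L}" and "lab v = Suc L"
  shows "bij_betw (lab(v := 0)) (internal N E) {1..L}"
proof -
  have "bij_betw lab (internal N E2 - {v}) ({1..Suc L} - {Suc L})"
    using bij_betw_DiffI[OF assms(1), of "{v}" "{Suc L}"] assms(2) internal_E2
      by (simp add: bij_betw_def)
  then have "bij_betw lab (internal N E) {1..L}"
    using internal_E2 v_notin_internal by (simp add: atLeastAtMostSuc_conv)
  then show ?thesis using v_notin_internal by (subst bij_betw_cong) auto
qed

lemma R_map_E2:
  assumes lab: "bij_betw lab (internal N E) {1..L}" and zero: "\<forall>x. x \<notin> internal N E \<longrightarrow> lab x = 0"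
  shows "R_map N (E2, lab(v := Suc L)) = (E, lab)"
proof -
  have "top_vertex N E2 (lab(v := Suc L)) = v"
    using top_vertex_eq[OF labeling_E2[OF lab]] internal_E2 by simp
  moreover have "lab(v := 0) = lab" using zero v_notin_internal by auto
  ultimately show ?thesis using children_E2_v E2_minus unfolding R_map_def Let_def by simp
qed

end

text \<open>A preimage of (E, lab) under R arises by choosing a vertex v of degree at most one,
  which becomes internal with the new top label, and a set S of two roots of trees not
  containing v, which become its children.\<close>
definition attach_choices :: "nat \<Rightarrow> nat set set \<Rightarrow> (nat \<times> nat set) set" where
  "attach_choices N E = {(v,S). v \<in> verts N \<and> deg E v \<le> 1 \<and> S \<subseteq> forest_roots N E - comp N E v
      \<and> card S = 2}"

fun attach :: "nat \<Rightarrow> nat set set \<times> (nat \<Rightarrow> nat) \<Rightarrow> nat \<times> nat set \<Rightarrow> nat set set \<times> (nat \<Rightarrow> nat)" where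
  "attach L (E, lab) (v, S) = (E \<union> {{v,w} | w. w \<in> S}, lab(v := L))"

lemma glue_roots_of_choice:
  assumes bf: "is_binary_forest N E" and vS: "(v, S) \<in> attach_choices N E"
  obtains a b where "S = {a,b}" "glue_roots N E v a b"
proof -
  have g: "is_graph N E" using bf by (rule is_binary_forest_graph)
  have v: "v \<in> verts N" and dv: "deg E v \<le> 1"
    and S: "S \<subseteq> forest_roots N E - comp N E v" "card S = 2"
    using vS unfolding attach_choices_def by auto
  obtain a b where ab: "S = {a,b}" "a \<noteq> b" using S(2) unfolding card_2_iff by blast
  have roots: "a \<in> forest_roots N E" "b \<in> forest_roots N E" and "a \<notin> comp N E v" "b \<notin> comp N E v"
    using S ab by auto
  moreover have a: "a \<in> verts N" and "b \<in> verts N" using roots unfolding forest_roots_def by auto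
  moreover have "b \<notin> comp N E a"
    using forest_roots_unique[OF bf comp_in_components[OF a]] comp_self[OF a] roots ab(2) by blast
  ultimately have "glue_roots N E v a b" using g v bf dv by unfold_locales auto
  then show ?thesis using that ab(1) by blast
qed

lemma attach_eq_E2: "glue N E v a b \<Longrightarrow> attach L (E, lab) (v, {a,b}) = (glue.E2 E v a b, lab(v := L))"
  using glue.E2_eq by simp

lemma half_diff_two: "(x::nat) div 2 = Suc L \<Longrightarrow> (x - 2) div 2 = L"
  by presburger

lemma attach_labeled_forest:
  assumes t: "(E, lab) \<in> labeled_forests (m + 2) N" and L: "(N - m) div 2 = Suc L"
    and vS: "(v, S) \<in> attach_choices N E"
  shows "attach (Suc L) (E, lab) (v, S) \<in> labeled_forests m N"
    and "R_map N (attach (Suc L) (E, lab) (v, S)) = (E, lab)"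
proof -
  have "(N - (m + 2)) div 2 = L" using half_diff_two[OF L] by (simp add: diff_diff_add)
  then have bfo: "binary_forest N (m + 2) E" and lab: "bij_betw lab (internal N E) {1..L}"
    and zero: "\<forall>x. x \<notin> internal N E \<longrightarrow> lab x = 0"
    using t mem_labeled_forests by auto
  obtain a b where S: "S = {a,b}" and gr: "glue_roots N E v a b"
    using glue_roots_of_choice[OF _ vS] bfo binary_forest_iff by blast
  interpret glue_roots N E v a b by (rule gr)
  have att: "attach (Suc L) (E, lab) (v, S) = (E2, lab(v := Suc L))"
    using attach_eq_E2[OF glue_axioms] S by simp
  have "\<forall>x. x \<notin> internal N E2 \<longrightarrow> (lab(v := Suc L)) x = 0" using zero internal_E2 by auto
  then show "attach (Suc L) (E, lab) (v, S) \<in> labeled_forests m N"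
    using att binary_forest_E2[OF bfo] labeling_E2[OF lab] L mem_labeled_forests by simp
  show "R_map N (attach (Suc L) (E, lab) (v, S)) = (E, lab)"
    using att R_map_E2[OF lab zero] by simp
qed

lemma labeled_forest_decompose:
  assumes t: "(E', lab') \<in> labeled_forests m N" and L: "(N - m) div 2 = Suc L"
  obtains E lab v S where "(E, lab) \<in> labeled_forests (m + 2) N" "(v, S) \<in> attach_choices N E"
    "(E', lab') = attach (Suc L) (E, lab) (v, S)"
proof -
  have bfo': "binary_forest N m E'" and lab': "bij_betw lab' (internal N E') {1..Suc L}"
    and zero': "\<forall>x. x \<notin> internal N E' \<longrightarrow> lab' x = 0"
    using t L mem_labeled_forests by auto
  have "Suc L \<in> lab' ` internal N E'" using lab' unfolding bij_betw_def by simp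
  then obtain v where vI: "v \<in> internal N E'" and lv: "lab' v = Suc L" by force
  have v: "v \<in> verts N" and int: "1 < deg E' v" using vI unfolding internal_def by auto
  have bf': "is_binary_forest N E'" using bfo' binary_forest_iff by simp
  obtain a b where "children N E' v = {a,b}" and gr: "glue_roots N (E' - {{v,a},{v,b}}) v a b"
      and ins: "insert {v,a} (insert {v,b} (E' - {{v,a},{v,b}})) = E'"
    using children_decompose[OF bf' v int] .
  define E where "E = E' - {{v,a},{v,b}}"
  interpret glue_roots N E v a b using gr unfolding E_def .
  have E2: "E2 = E'" using ins unfolding E_def by simp
  have "card (components N E) = m + 2"
    using card_components_E2 E2 bfo' by (simp add: binary_forest_iff)
  then have "binary_forest N (m + 2) E" using bf by (simp add: binary_forest_iff)
  moreover have "(N - (m + 2)) div 2 = L" using half_diff_two[OF L] by (simp add: diff_diff_add)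
  moreover have "\<forall>x. x \<notin> internal N E \<longrightarrow> (lab'(v := 0)) x = 0" using zero' internal_E2 E2 by simp
  ultimately have "(E, lab'(v := 0)) \<in> labeled_forests (m + 2) N"
    using labeling_E2_inverse lab' lv E2 mem_labeled_forests by simp
  moreover have "(v, {a,b}) \<in> attach_choices N E"
    unfolding attach_choices_def using v dv da db not_in_comps glued_neq by simp
  moreover have "attach (Suc L) (E, lab'(v := 0)) (v, {a,b}) = (E', lab')"
    using attach_eq_E2[OF glue_axioms] E2 lv by (simp add: fun_upd_idem)
  ultimately show ?thesis using that[of E "lab'(v := 0)" v "{a,b}"] by simp
qed

lemma attached_set_eq:
  assumes "\<forall>w\<in>S. {v,w} \<notin> E \<and> w \<noteq> v"
  shows "S = {w. w \<noteq> v \<and> {v,w} \<in> (E \<union> {{v,w} | w. w \<in> S}) - E}"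
  using assms by (auto simp: doubleton_eq_iff)

lemma inj_on_attach:
  assumes t: "(E, lab) \<in> labeled_forests m N" and L: "L \<noteq> 0"
  shows "inj_on (attach L (E, lab)) (attach_choices N E)"
proof (rule inj_onI, clarify)
  fix v S v' S'
  assume x: "(v, S) \<in> attach_choices N E" and y: "(v', S') \<in> attach_choices N E"
    and e: "attach L (E, lab) (v, S) = attach L (E, lab) (v', S')"
  have zero: "\<forall>x. x \<notin> internal N E \<longrightarrow> lab x = 0" and g: "is_graph N E"
    using t mem_labeled_forests binary_forest_iff is_binary_forest_graph by blast+
  have v: "v \<in> verts N" "deg E v \<le> 1" "S \<subseteq> forest_roots N E - comp N E v"
    and v': "deg E v' \<le> 1" "S' \<subseteq> forest_roots N E - comp N E v'"
    using x y unfolding attach_choices_def by auto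
  have "lab(v := L) = lab(v' := L)" using e by simp
  moreover have "lab v' = 0" using zero v' unfolding internal_def by simp
  ultimately have vv': "v = v'" using L by (metis fun_upd_apply)
  have outside: "\<forall>w\<in>T. {v,w} \<notin> E \<and> w \<noteq> v" if "T \<subseteq> forest_roots N E - comp N E v" for T
    using that edge_mem_comp[OF g, of v] comp_self[OF v(1), of E] by blast
  have "S' \<subseteq> forest_roots N E - comp N E v" using v'(2) vv' by simp
  moreover have "E \<union> {{v,w} | w. w \<in> S} = E \<union> {{v,w} | w. w \<in> S'}" using e vv' by simp
  ultimately have "S = S'"
    using attached_set_eq[OF outside[OF v(3)]] attached_set_eq[OF outside] by simp
  then show "v = v' \<and> S = S'" using vv' by simp
qed

lemma card_forest_roots_outside:
  assumes bf: "is_binary_forest N E" and v: "v \<in> verts N"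
  shows "card (forest_roots N E - comp N E v) = card (components N E) - 1"
proof -
  obtain r where "r \<in> comp N E v \<and> r \<in> forest_roots N E"
    and "\<And>y. y \<in> comp N E v \<and> y \<in> forest_roots N E \<Longrightarrow> y = r"
    using forest_roots_unique[OF bf comp_in_components[OF v]] by blast
  then have "forest_roots N E \<inter> comp N E v = {r}" by blast
  then show ?thesis using card_forest_roots[OF bf] card_Diff_subset_Int[of "forest_roots N E"]
    unfolding forest_roots_def by simp
qed

lemma card_non_internal:
  assumes "bij_betw lab (internal N E) {1..L}"
  shows "card {v \<in> verts N. deg E v \<le> 1} = N - L"
proof -
  have "{v \<in> verts N. deg E v \<le> 1} = verts N - internal N E" unfolding internal_def by auto
  moreover have "internal N E \<subseteq> verts N" unfolding internal_def by auto
  ultimately show ?thesis using bij_betw_same_card[OF assms] card_Diff_subset finite_subset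
    by (metis card_atLeastAtMost diff_Suc_1 verts_def verts_finite)
qed

lemma card_attach_choices:
  assumes t: "(E, lab) \<in> labeled_forests m N"
  shows "card (attach_choices N E) = (N - (N - m) div 2) * ((m - 1) choose 2)"
proof -
  have bf: "is_binary_forest N E" and m: "card (components N E) = m"
    and lab: "bij_betw lab (internal N E) {1..(N - m) div 2}"
    using t mem_labeled_forests binary_forest_iff by auto
  let ?Lv = "{v \<in> verts N. deg E v \<le> 1}"
  have "attach_choices N E = Sigma ?Lv (\<lambda>v. {S. S \<subseteq> forest_roots N E - comp N E v \<and> card S = 2})"
    unfolding attach_choices_def by auto
  moreover have "card {S. S \<subseteq> forest_roots N E - comp N E v \<and> card S = 2} = (m - 1) choose 2"
    if "v \<in> ?Lv" for v
    using n_subsets[of "forest_roots N E - comp N E v" 2] card_forest_roots_outside[OF bf] that m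
    unfolding forest_roots_def by simp
  ultimately show ?thesis
    using card_SigmaI[of ?Lv] card_non_internal[OF lab] unfolding forest_roots_def by simp
qed

lemma R_map_fiber:
  assumes t: "(E, lab) \<in> labeled_forests (m + 2) N" and L: "(N - m) div 2 = Suc L"
  shows "{\<tau>' \<in> labeled_forests m N. R_map N \<tau>' = (E, lab)}
      = attach (Suc L) (E, lab) ` attach_choices N E"
proof (intro equalityI subsetI)
  fix \<tau>' assume "\<tau>' \<in> {\<tau>' \<in> labeled_forests m N. R_map N \<tau>' = (E, lab)}"
  then have \<tau>': "\<tau>' \<in> labeled_forests m N" "R_map N \<tau>' = (E, lab)" by simp_all
  obtain E' lab' where p: "\<tau>' = (E', lab')" by (cases \<tau>')
  obtain E0 lab0 v S where d: "(E0, lab0) \<in> labeled_forests (m + 2) N" "(v, S) \<in> attach_choices N E0"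
    "(E', lab') = attach (Suc L) (E0, lab0) (v, S)"
    using labeled_forest_decompose[OF \<tau>'(1)[unfolded p] L] .
  have "(E0, lab0) = (E, lab)" using attach_labeled_forest(2)[OF d(1) L d(2)] d(3) p \<tau>'(2) by simp
  then show "\<tau>' \<in> attach (Suc L) (E, lab) ` attach_choices N E"
    using d p image_eqI[of \<tau>' "attach (Suc L) (E, lab)" "(v, S)"] by simp
next
  fix \<tau>' assume "\<tau>' \<in> attach (Suc L) (E, lab) ` attach_choices N E"
  then obtain v S where "(v, S) \<in> attach_choices N E" "\<tau>' = attach (Suc L) (E, lab) (v, S)" by auto
  then show "\<tau>' \<in> {\<tau>' \<in> labeled_forests m N. R_map N \<tau>' = (E, lab)}"
    using attach_labeled_forest[OF t L] by simp
qed

lemma R_map_labeled_forests: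
  assumes t: "(E', lab') \<in> labeled_forests m N" and L: "(N - m) div 2 = Suc L"
  shows "R_map N (E', lab') \<in> labeled_forests (m + 2) N"
proof -
  obtain E lab v S where d: "(E, lab) \<in> labeled_forests (m + 2) N" "(v, S) \<in> attach_choices N E"
    "(E', lab') = attach (Suc L) (E, lab) (v, S)"
    using labeled_forest_decompose[OF t L] .
  then show ?thesis using attach_labeled_forest(2)[OF d(1) L d(2)] by simp
qed

lemma card_R_map_fiber:
  assumes t: "\<tau> \<in> labeled_forests (m + 2) N" and L: "(N - m) div 2 = Suc L"
  shows "card {\<tau>' \<in> labeled_forests m N. R_map N \<tau>' = \<tau>} = (N - L) * ((m + 1) choose 2)"
proof -
  obtain E lab where \<tau>: "\<tau> = (E, lab)" by fastforce
  have "(N - (m + 2)) div 2 = L" using half_diff_two[OF L] by (simp add: diff_diff_add)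
  then show ?thesis
    using R_map_fiber[OF t[unfolded \<tau>] L] card_image[OF inj_on_attach[OF t[unfolded \<tau>]]]
      card_attach_choices[OF t[unfolded \<tau>]] \<tau> by simp
qed

lemma R_map_image:
  assumes L: "(N - m) div 2 = Suc L" and m: "1 \<le> m"
  shows "R_map N ` labeled_forests m N = labeled_forests (m + 2) N"
proof
  show "R_map N ` labeled_forests m N \<subseteq> labeled_forests (m + 2) N"
    using R_map_labeled_forests[OF _ L] by force
  show "labeled_forests (m + 2) N \<subseteq> R_map N ` labeled_forests m N"
  proof
    fix \<tau> assume t: "\<tau> \<in> labeled_forests (m + 2) N"
    have "L < N" using L by linarith
    then have "card {\<tau>' \<in> labeled_forests m N. R_map N \<tau>' = \<tau>} \<noteq> 0"
      using card_R_map_fiber[OF t L] m by simp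
    then have "{\<tau>' \<in> labeled_forests m N. R_map N \<tau>' = \<tau>} \<noteq> {}" by force
    then show "\<tau> \<in> R_map N ` labeled_forests m N" by force
  qed
qed

theorem lemma4p2:
  fixes n k N :: nat
  assumes "N = 2 * n + 1" and "1 \<le> k" and "k \<le> n"
  shows "R_map N ` labeled_forests (2 * k - 1) N = labeled_forests (2 * k + 1) N \<and>
         (\<forall>\<tau> \<in> labeled_forests (2 * k + 1) N.
            card {\<tau>' \<in> labeled_forests (2 * k - 1) N. R_map N \<tau>' = \<tau>} = (n + k + 1) * k * (2 * k - 1))"
proof -
  have m: "2 * k - 1 + 2 = 2 * k + 1" "1 \<le> 2 * k - 1" and L: "(N - (2 * k - 1)) div 2 = Suc (n - k)"
    using assms by auto
  have "N - (n - k) = n + k + 1" using assms by simp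
  moreover have "(2 * k - 1 + 1) choose 2 = k * (2 * k - 1)"
    using assms(2) unfolding choose_two by (cases k) (auto simp: algebra_simps)
  ultimately have count: "(N - (n - k)) * ((2 * k - 1 + 1) choose 2)
      = (n + k + 1) * k * (2 * k - 1)"
    by (simp only: mult.assoc)
  show ?thesis
  proof (intro conjI ballI)
    show "R_map N ` labeled_forests (2 * k - 1) N = labeled_forests (2 * k + 1) N"
      using R_map_image[OF L m(2)] m(1) by simp
    fix \<tau> assume "\<tau> \<in> labeled_forests (2 * k + 1) N"
    then show "card {\<tau>' \<in> labeled_forests (2 * k - 1) N. R_map N \<tau>' = \<tau>}
        = (n + k + 1) * k * (2 * k - 1)"
      using card_R_map_fiber[OF _ L, of \<tau>] m(1) count by simp
  qed
qed

end
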